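(* Let $V_0=\mathbb{C}[x_1,x_2,\dots]$ be the polynomial algebra in countably many variables, regarded as a Hopf algebra with each $x_i$ primitive, and let $A$ be a commutative $\mathbb{C}$-algebra. Then for any symmetric $A$-valued bicharacters $s_1,s_2$ on $V_0$ there exists an $A$-valued bicharacter $r$ on $V_0$ such that $\mathrm{EQ}_r$ is an algebra isomorphism \[ \mathrm{EQ}_r\colon (V_0\otimes A,\bullet_{s_1})\to (V_0\otimes A,\bullet_{s_2}) \] intertwining the two $\bullet$ products. In particular, for any symmetric $A$-valued bicharacter $s$ there exists an isomorphism $\mathrm{EQ}_r\colon (V_0\otimes A,\cdot)\to (V_0\otimes A,\bullet_s)$ from the standard product to $\bullet_s$.
   Context: The Hopf structure on $V_0$: $\Delta(x_i)=x_i\otimes 1+1\otimes x_i$, $\eta(x_i)=0$, $S(x_i)=-x_i$. Sweedler notation: $\Delta(a)=\sum a'\otimes a''$, $\Delta^2(a)=\sum a'\otimes a''\otimes a'''$. An $A$-valued bicharacter on $V_0$ is a linear map $r:V_0\otimes V_0\to A$ with $r(1\otimes a)=\eta(a)=r(a\otimes 1)$, $r(ab\otimes c)=\sum r(a\otimes c')r(b\otimes c'')$, $r(a\otimes bc)=\sum r(a'\otimes b)r(a''\otimes c)$. $r^t(a\otimes b)=r(b\otimes a)$; $t$ is symmetric if $t=t^t$. For a symmetric bicharacter $t$, $\bullet_t$ is the $A$-bilinear product on $V_0\otimes A$ extending $a\bullet_t b=\sum a'b'\,t(a''\otimes b'')$; the standard product is $\bullet_\epsilon$ with $\epsilon(a\otimes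 b)=\eta(a)\eta(b)$. $\mathrm{EQ}_r(m)=\sum r(m'\otimes m'')m'''$, extended $A$-linearly to $V_0\otimes A$. *)

theory Defs
  imports Complex_Main "HOL-Library.Poly_Mapping"
begin

text \<open>V_0 = C[x_1,x_2,...] has the monomial basis x^m, m :: nat =>0 nat (exponent vectors).
  V_0 (tensor over C) A is identified with A[x_1,x_2,...], i.e. the finitely supported maps
  mono =>0 A (coefficient of each monomial).  A C-linear map V_0 (x) V_0 -> A is determined by
  its values on basis pairs, so an A-valued bilinear form on V_0 is a function mono => mono => A.\<close>

type_synonym mono = "nat \<Rightarrow>\<^sub>0 nat"

text \<open>A commutative (unital) C-algebra A: a commutative ring with a unital ring homomorphism C -> A.\<close>
definition complex_algebra_structure :: "(complex \<Rightarrow> 'a::comm_ring_1) \<Rightarrow> bool" where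
  "complex_algebra_structure emb \<longleftrightarrow>
     emb 1 = 1 \<and> (\<forall>x y. emb (x + y) = emb x + emb y) \<and> (\<forall>x y. emb (x * y) = emb x * emb y)"

text \<open>Binomial coefficient of the coproduct: Delta(x^mu) = sum over alpha+beta=mu of
  bcoef mu alpha * x^alpha (x) x^beta  (each x_i primitive).\<close>
definition bcoef :: "mono \<Rightarrow> mono \<Rightarrow> nat" where
  "bcoef \<mu> \<alpha> = (\<Prod>i\<in>Poly_Mapping.keys \<mu>. Poly_Mapping.lookup \<mu> i choose Poly_Mapping.lookup \<alpha> i)"

definition splits :: "mono \<Rightarrow> (mono \<times> mono) set" where
  "splits \<mu> = {(\<alpha>, \<beta>). \<alpha> + \<beta> = \<mu>}"

definition splits3 :: "mono \<Rightarrow> (mono \<times> mono \<times> mono) set" where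
  "splits3 \<mu> = {(\<alpha>, \<beta>, \<gamma>). \<alpha> + \<beta> + \<gamma> = \<mu>}"

definition counit :: "mono \<Rightarrow> 'a::comm_ring_1" where
  "counit m = (if m = 0 then 1 else 0)"

definition is_bichar :: "(mono \<Rightarrow> mono \<Rightarrow> 'a::comm_ring_1) \<Rightarrow> bool" where
  "is_bichar r \<longleftrightarrow>
     (\<forall>\<alpha>. r 0 \<alpha> = counit \<alpha>) \<and> (\<forall>\<alpha>. r \<alpha> 0 = counit \<alpha>) \<and>
     (\<forall>\<alpha> \<beta> \<gamma>. r (\<alpha> + \<beta>) \<gamma> =
        (\<Sum>(\<delta>, \<epsilon>)\<in>splits \<gamma>. of_nat (bcoef \<gamma> \<delta>) * r \<alpha> \<delta> * r \<beta> \<epsilon>)) \<and>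
     (\<forall>\<alpha> \<beta> \<gamma>. r \<alpha> (\<beta> + \<gamma>) =
        (\<Sum>(\<delta>, \<epsilon>)\<in>splits \<alpha>. of_nat (bcoef \<alpha> \<delta>) * r \<delta> \<beta> * r \<epsilon> \<gamma>))"

definition transp_bichar :: "(mono \<Rightarrow> mono \<Rightarrow> 'a) \<Rightarrow> (mono \<Rightarrow> mono \<Rightarrow> 'a)" where
  "transp_bichar r = (\<lambda>\<alpha> \<beta>. r \<beta> \<alpha>)"

definition symmetric_bichar :: "(mono \<Rightarrow> mono \<Rightarrow> 'a::comm_ring_1) \<Rightarrow> bool" where
  "symmetric_bichar t \<longleftrightarrow> is_bichar t \<and> t = transp_bichar t"

text \<open>The product bullet_t on V_0 (x) A, A-bilinear extension of
  a bullet_t b = sum a' b' t(a'' (x) b'').\<close>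
definition bullet :: "(mono \<Rightarrow> mono \<Rightarrow> 'a::comm_ring_1) \<Rightarrow> (mono \<Rightarrow>\<^sub>0 'a) \<Rightarrow> (mono \<Rightarrow>\<^sub>0 'a) \<Rightarrow> (mono \<Rightarrow>\<^sub>0 'a)" where
  "bullet t p q =
     (\<Sum>\<alpha>\<in>Poly_Mapping.keys p. \<Sum>\<beta>\<in>Poly_Mapping.keys q. \<Sum>(\<alpha>1, \<alpha>2)\<in>splits \<alpha>. \<Sum>(\<beta>1, \<beta>2)\<in>splits \<beta>.
        Poly_Mapping.single (\<alpha>1 + \<beta>1)
          (Poly_Mapping.lookup p \<alpha> * Poly_Mapping.lookup q \<beta> * of_nat (bcoef \<alpha> \<alpha>1) * of_nat (bcoef \<beta> \<beta>1) * t \<alpha>2 \<beta>2))"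

text \<open>Standard bicharacter epsilon(a (x) b) = eta(a) eta(b); bullet_epsilon is the usual product.\<close>
definition std_bichar :: "mono \<Rightarrow> mono \<Rightarrow> 'a::comm_ring_1" where
  "std_bichar \<alpha> \<beta> = counit \<alpha> * counit \<beta>"

text \<open>EQ_r(m) = sum r(m' (x) m'') m''', extended A-linearly.  Delta^2(x^mu) =
  sum over alpha+beta+gamma=mu of mu!/(alpha! beta! gamma!) x^alpha (x) x^beta (x) x^gamma,
  and mu!/(alpha!beta!gamma!) = bcoef mu alpha * bcoef (beta+gamma) beta.\<close>
definition EQ :: "(mono \<Rightarrow> mono \<Rightarrow> 'a::comm_ring_1) \<Rightarrow> (mono \<Rightarrow>\<^sub>0 'a) \<Rightarrow> (mono \<Rightarrow>\<^sub>0 'a)" where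
  "EQ r p =
     (\<Sum>\<mu>\<in>Poly_Mapping.keys p. \<Sum>(\<alpha>, \<beta>, \<gamma>)\<in>splits3 \<mu>.
        Poly_Mapping.single \<gamma>
          (Poly_Mapping.lookup p \<mu> * of_nat (bcoef \<mu> \<alpha> * bcoef (\<beta> + \<gamma>) \<beta>) * r \<alpha> \<beta>))"

end

theory Submission
  imports Defs
begin

text \<open>Under the convolution product the bicharacters form a commutative group, with unit
  \<^const>\<open>std_bichar\<close> and with \<open>deg_scale (-1) s\<close> inverse to \<open>s\<close>, and \<open>EQ r\<close> carries
  \<open>bullet t\<close> to \<open>bullet (t r r\<^sup>T)\<close>. Since 2 is invertible in \<open>A\<close>, the symmetric bicharacter
  \<open>u = s\<^sub>2 s\<^sub>1\<^sup>-\<^sup>1\<close> has the symmetric square root \<open>r = deg_scale (1/2) u\<close>, so \<open>s\<^sub>1 r r\<^sup>T = s\<^sub>2\<close>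
  and \<open>EQ r\<close> intertwines \<open>bullet s\<^sub>1\<close> with \<open>bullet s\<^sub>2\<close>; it is bijective, the inverse being \<open>EQ\<close>
  of the inverse of \<open>r\<close>.

  The coproduct identities behind this are proved by writing a monomial as a product of
  variables \<open>x\<^sub>w\<^sub>p\<close>, \<open>p \<in> P\<close>, over a finite index set \<open>P\<close>: an \<open>n\<close>-fold iterated Sweedler sum then
  becomes a sum over \<open>n\<close>-colourings of \<open>P\<close>, and two such sums agree after relabelling the colours.\<close>

section \<open>Monomials as products of variables\<close>

definition var_monom :: "(nat \<Rightarrow> nat) \<Rightarrow> nat set \<Rightarrow> mono" where
  "var_monom w S = (\<Sum>x\<in>S. Poly_Mapping.single (w x) 1)"

lemma var_monom_empty [simp]: "var_monom w {} = 0"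
  by (simp add: var_monom_def)

lemma var_monom_insert:
  "finite S \<Longrightarrow> x \<notin> S \<Longrightarrow> var_monom w (insert x S) = Poly_Mapping.single (w x) 1 + var_monom w S"
  by (simp add: var_monom_def)

lemma var_monom_union:
  "finite A \<Longrightarrow> finite B \<Longrightarrow> A \<inter> B = {} \<Longrightarrow> var_monom w (A \<union> B) = var_monom w A + var_monom w B"
  by (simp add: var_monom_def sum.union_disjoint)

lemma var_monom_cong: "(\<And>x. x \<in> S \<Longrightarrow> w x = w' x) \<Longrightarrow> var_monom w S = var_monom w' S"
  by (simp add: var_monom_def)

definition total_deg :: "mono \<Rightarrow> nat" where
  "total_deg \<mu> = (\<Sum>i\<in>Poly_Mapping.keys \<mu>. Poly_Mapping.lookup \<mu> i)"

lemma total_deg_0 [simp]: "total_deg 0 = 0"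
  by (simp add: total_deg_def)

lemma total_deg_add: "total_deg (\<alpha> + \<beta>) = total_deg \<alpha> + total_deg \<beta>"
  unfolding total_deg_def by (rule setsum_keys_plus_distrib[where f = "\<lambda>_ n. n"]) simp_all

lemma total_deg_single [simp]: "total_deg (Poly_Mapping.single i n) = n"
  by (simp add: total_deg_def)

lemma total_deg_var_monom: "finite S \<Longrightarrow> total_deg (var_monom w S) = card S"
  by (induction S rule: finite_induct) (simp_all add: var_monom_insert total_deg_add)

lemma lookup_le_total_deg: "Poly_Mapping.lookup \<mu> i \<le> total_deg \<mu>"
proof (cases "i \<in> Poly_Mapping.keys \<mu>")
  case True
  then show ?thesis unfolding total_deg_def by (intro member_le_sum) auto
qed (simp add: in_keys_iff)

lemma total_deg_eq_0_iff: "total_deg \<mu> = 0 \<longleftrightarrow> \<mu> = 0"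
  using lookup_le_total_deg[of \<mu>] by (auto intro: poly_mapping_eqI)

lemma add_var_diff_cancel:
  fixes \<mu> :: mono
  shows "0 < Poly_Mapping.lookup \<mu> i \<Longrightarrow> \<mu> - Poly_Mapping.single i 1 + Poly_Mapping.single i 1 = \<mu>"
  by (intro poly_mapping_eqI) (auto simp: lookup_add lookup_minus lookup_single when_def)

lemma var_monom_surj: "\<exists>w n. var_monom w {..<n} = \<mu>"
proof (induction "total_deg \<mu>" arbitrary: \<mu> rule: less_induct)
  case less
  show ?case
  proof (cases "\<mu> = 0")
    case True
    then show ?thesis by (intro exI[of _ id] exI[of _ 0]) simp
  next
    case False
    then obtain i where i: "0 < Poly_Mapping.lookup \<mu> i"
      by (metis gr0I poly_mapping_eqI lookup_zero)
    let ?e = "Poly_Mapping.single i (1::nat)"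
    have \<mu>: "\<mu> - ?e + ?e = \<mu>"
      using i by (rule add_var_diff_cancel)
    then have "total_deg \<mu> = total_deg (\<mu> - ?e) + 1"
      by (metis total_deg_add total_deg_single)
    then obtain w n where wn: "var_monom w {..<n} = \<mu> - ?e"
      using less by force
    have "var_monom (w(n := i)) {..<Suc n} = ?e + var_monom (w(n := i)) {..<n}"
      by (simp add: lessThan_Suc var_monom_insert)
    also have "var_monom (w(n := i)) {..<n} = \<mu> - ?e"
      using wn by (metis var_monom_cong fun_upd_other lessThan_iff less_irrefl)
    finally show ?thesis
      using \<mu> by (metis add.commute)
  qed
qed

lemma var_monom_finite_rep:
  obtains w P where "finite P" "var_monom w P = \<mu>"
  using var_monom_surj by blast

lemma var_monom_extend:
  assumes "finite P"
  obtains Q w' where "finite Q" "P \<inter> Q = {}" "\<And>x. x \<in> P \<Longrightarrow> w' x = w x" "var_monom w' Q = \<nu>"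
proof -
  obtain v n where v: "var_monom v {..<n} = \<nu>"
    using var_monom_surj by blast
  obtain N where N: "P \<subseteq> {..<N}"
    using assms by (meson finite_nat_set_iff_bounded lessThan_iff subsetI)
  define w' where "w' x = (if x < N then w x else v (x - N))" for x
  have "var_monom w' {N..<N+n} = var_monom v {..<n}"
    unfolding var_monom_def
    by (rule sum.reindex_bij_witness[where i = "\<lambda>j. j + N" and j = "\<lambda>x. x - N"]) (auto simp: w'_def)
  with N v show ?thesis
    by (intro that[of "{N..<N+n}" w']) (auto simp: w'_def)
qed

lemma splits_iff: "(\<alpha>, \<beta>) \<in> splits \<mu> \<longleftrightarrow> \<alpha> + \<beta> = \<mu>"
  by (simp add: splits_def)

lemma splits_0: "splits 0 = {(0, 0)}"
  by (auto simp: splits_def poly_mapping_eq_iff lookup_add fun_eq_iff)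

lemma finite_splits: "finite (splits \<mu>)"
proof -
  let ?B = "{\<alpha>. \<forall>i. Poly_Mapping.lookup \<alpha> i \<le> Poly_Mapping.lookup \<mu> i}"
  let ?F = "{f. \<forall>x. (x \<in> Poly_Mapping.keys \<mu> \<longrightarrow> f x \<in> {..total_deg \<mu>}) \<and> (x \<notin> Poly_Mapping.keys \<mu> \<longrightarrow> f x = 0)}"
  have "Poly_Mapping.lookup ` ?B \<subseteq> ?F"
  proof
    fix f assume "f \<in> Poly_Mapping.lookup ` ?B"
    then obtain \<alpha> where f: "f = Poly_Mapping.lookup \<alpha>"
      and le: "\<forall>i. Poly_Mapping.lookup \<alpha> i \<le> Poly_Mapping.lookup \<mu> i"
      by blast
    have "f x \<le> total_deg \<mu>" for x
      using le lookup_le_total_deg[of \<mu> x] f by (metis order_trans)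
    moreover have "f x = 0" if "x \<notin> Poly_Mapping.keys \<mu>" for x
      using le that f by (metis in_keys_iff le_zero_eq)
    ultimately show "f \<in> ?F"
      by simp
  qed
  then have "finite (Poly_Mapping.lookup ` ?B)"
    by (rule finite_subset) (intro finite_set_of_finite_funs; simp)
  then have "finite ?B"
    by (rule finite_imageD) (rule inj_onI, simp add: poly_mapping.lookup_inject)
  moreover have "splits \<mu> \<subseteq> (\<lambda>\<alpha>. (\<alpha>, \<mu> - \<alpha>)) ` ?B"
  proof
    fix x assume "x \<in> splits \<mu>"
    then obtain \<alpha> \<beta> where x: "x = (\<alpha>, \<beta>)" "\<alpha> + \<beta> = \<mu>"
      by (auto simp: splits_def)
    then have "\<beta> = \<mu> - \<alpha>" and "\<alpha> \<in> ?B"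
      by (auto simp: lookup_add)
    then show "x \<in> (\<lambda>\<alpha>. (\<alpha>, \<mu> - \<alpha>)) ` ?B"
      using x by auto
  qed
  ultimately show ?thesis
    by (rule finite_subset[OF _ finite_imageI, rotated])
qed

section \<open>Sweedler sums\<close>

definition sweedler :: "mono \<Rightarrow> (mono \<Rightarrow> mono \<Rightarrow> 'b::comm_semiring_1) \<Rightarrow> 'b" where
  "sweedler \<mu> g = (\<Sum>(\<alpha>, \<beta>)\<in>splits \<mu>. of_nat (bcoef \<mu> \<alpha>) * g \<alpha> \<beta>)"

lemma bcoef_superset:
  assumes "finite K" "Poly_Mapping.keys \<nu> \<subseteq> K" "\<And>j. Poly_Mapping.lookup \<alpha> j \<le> Poly_Mapping.lookup \<nu> j"
  shows "bcoef \<nu> \<alpha> = (\<Prod>j\<in>K. Poly_Mapping.lookup \<nu> j choose Poly_Mapping.lookup \<alpha> j)"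
  unfolding bcoef_def
proof (rule prod.mono_neutral_left)
  show "\<forall>j\<in>K - Poly_Mapping.keys \<nu>. Poly_Mapping.lookup \<nu> j choose Poly_Mapping.lookup \<alpha> j = 1"
  proof
    fix j assume "j \<in> K - Poly_Mapping.keys \<nu>"
    then have "Poly_Mapping.lookup \<nu> j = 0" and "Poly_Mapping.lookup \<alpha> j = 0"
      using assms(3)[of j] by (simp_all add: in_keys_iff)
    then show "Poly_Mapping.lookup \<nu> j choose Poly_Mapping.lookup \<alpha> j = 1"
      by simp
  qed
qed (use assms in auto)

lemma bcoef_off_var:
  fixes \<mu> \<nu> \<alpha> \<alpha>' :: mono
  assumes "Poly_Mapping.keys \<nu> \<subseteq> insert i (Poly_Mapping.keys \<mu>)"
    and "\<And>j. Poly_Mapping.lookup \<alpha>' j \<le> Poly_Mapping.lookup \<nu> j"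
    and "\<And>j. j \<noteq> i \<Longrightarrow> Poly_Mapping.lookup \<nu> j = Poly_Mapping.lookup \<mu> j"
    and "\<And>j. j \<noteq> i \<Longrightarrow> Poly_Mapping.lookup \<alpha>' j = Poly_Mapping.lookup \<alpha> j"
  shows "bcoef \<nu> \<alpha>' = (Poly_Mapping.lookup \<nu> i choose Poly_Mapping.lookup \<alpha>' i) *
    (\<Prod>j\<in>Poly_Mapping.keys \<mu> - {i}. Poly_Mapping.lookup \<mu> j choose Poly_Mapping.lookup \<alpha> j)"
proof -
  have "bcoef \<nu> \<alpha>' =
      (\<Prod>j\<in>insert i (Poly_Mapping.keys \<mu>). Poly_Mapping.lookup \<nu> j choose Poly_Mapping.lookup \<alpha>' j)"
    using assms(1,2) by (intro bcoef_superset) simp_all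
  also have "\<dots> = (Poly_Mapping.lookup \<nu> i choose Poly_Mapping.lookup \<alpha>' i) *
      (\<Prod>j\<in>Poly_Mapping.keys \<mu> - {i}. Poly_Mapping.lookup \<nu> j choose Poly_Mapping.lookup \<alpha>' j)"
    by (simp add: prod.insert_remove)
  also have "(\<Prod>j\<in>Poly_Mapping.keys \<mu> - {i}. Poly_Mapping.lookup \<nu> j choose Poly_Mapping.lookup \<alpha>' j) =
      (\<Prod>j\<in>Poly_Mapping.keys \<mu> - {i}. Poly_Mapping.lookup \<mu> j choose Poly_Mapping.lookup \<alpha> j)"
    using assms(3,4) by (intro prod.cong) auto
  finally show ?thesis .
qed

text \<open>Pascal's rule for the coproduct coefficients.\<close>

lemma bcoef_add_var:
  fixes \<mu> :: mono
  assumes split: "\<alpha> + \<beta> = \<mu> + Poly_Mapping.single i 1"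
  shows "bcoef (\<mu> + Poly_Mapping.single i 1) \<alpha> =
    (if 0 < Poly_Mapping.lookup \<alpha> i then bcoef \<mu> (\<alpha> - Poly_Mapping.single i 1) else 0) +
    (if 0 < Poly_Mapping.lookup \<beta> i then bcoef \<mu> \<alpha> else 0)"
proof -
  define e :: mono where "e = Poly_Mapping.single i 1"
  define L :: "mono \<Rightarrow> nat \<Rightarrow> nat" where "L = Poly_Mapping.lookup"
  define P where "P = (\<Prod>j\<in>Poly_Mapping.keys \<mu> - {i}. L \<mu> j choose L \<alpha> j)"
  have Le: "L e j = (if j = i then 1 else 0)" for j
    by (simp add: L_def e_def lookup_single)
  have coords: "L \<alpha> j + L \<beta> j = L \<mu> j + L e j" for j
    using arg_cong[OF split, of "\<lambda>x. Poly_Mapping.lookup x j"] by (simp add: L_def e_def lookup_add)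
  have A: "bcoef (\<mu> + e) \<alpha> = (L \<mu> i + 1 choose L \<alpha> i) * P"
  proof -
    have "Poly_Mapping.keys (\<mu> + e) \<subseteq> insert i (Poly_Mapping.keys \<mu>)"
      using keys_add[of \<mu> e] by (auto simp: e_def)
    moreover have "L \<alpha> j \<le> L (\<mu> + e) j" for j
      using coords[of j] by (simp add: L_def lookup_add)
    ultimately show ?thesis
      using bcoef_off_var[of "\<mu> + e" i \<mu> \<alpha> \<alpha>]
      by (simp add: P_def L_def lookup_add Le[unfolded L_def])
  qed
  have B: "bcoef \<mu> (\<alpha> - e) = (L \<mu> i choose (L \<alpha> i - 1)) * P"
  proof -
    have "L (\<alpha> - e) j \<le> L \<mu> j" for j
      using coords[of j] by (simp add: L_def lookup_minus)
    then show ?thesis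
      using bcoef_off_var[of \<mu> i \<mu> "\<alpha> - e" \<alpha>]
      by (simp add: P_def L_def lookup_minus Le[unfolded L_def] subset_insertI)
  qed
  have C: "bcoef \<mu> \<alpha> = (L \<mu> i choose L \<alpha> i) * P" if "0 < L \<beta> i"
  proof -
    have "L \<alpha> j \<le> L \<mu> j" for j
      using coords[of j] that by (cases "j = i") (simp_all add: Le)
    then show ?thesis
      using bcoef_off_var[of \<mu> i \<mu> \<alpha> \<alpha>] by (simp add: P_def L_def subset_insertI)
  qed
  show ?thesis
  proof (cases "L \<alpha> i")
    case 0
    then show ?thesis
      using coords[of i] A C by (simp add: L_def e_def Le)
  next
    case (Suc k)
    then show ?thesis
      using coords[of i] A B C by (cases "L \<beta> i") (simp_all add: L_def e_def Le algebra_simps)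
  qed
qed

lemma sum_splits_swap: "(\<Sum>(\<alpha>, \<beta>)\<in>splits \<mu>. f \<alpha> \<beta>) = (\<Sum>(\<alpha>, \<beta>)\<in>splits \<mu>. f \<beta> \<alpha>)"
  by (rule sum.reindex_bij_witness[where i = prod.swap and j = prod.swap]) (auto simp: splits_def add.commute)

lemma sum_splits_add_var:
  fixes \<mu> :: mono
  shows "(\<Sum>(\<alpha>, \<beta>)\<in>{x\<in>splits (\<mu> + Poly_Mapping.single i 1). 0 < Poly_Mapping.lookup (fst x) i}. f \<alpha> \<beta>) =
    (\<Sum>(\<alpha>, \<beta>)\<in>splits \<mu>. f (\<alpha> + Poly_Mapping.single i 1) \<beta>)"
proof (rule sum.reindex_bij_witness[where i = "\<lambda>(\<alpha>, \<beta>). (\<alpha> + Poly_Mapping.single i 1, \<beta>)"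
      and j = "\<lambda>(\<alpha>, \<beta>). (\<alpha> - Poly_Mapping.single i 1, \<beta>)"])
  fix x
  assume "x \<in> {x\<in>splits (\<mu> + Poly_Mapping.single i 1). 0 < Poly_Mapping.lookup (fst x) i}"
  then obtain \<alpha> \<beta> where x: "x = (\<alpha>, \<beta>)" "\<alpha> + \<beta> = \<mu> + Poly_Mapping.single i 1"
    and pos: "0 < Poly_Mapping.lookup \<alpha> i"
    by (cases x) (auto simp: splits_iff)
  have \<alpha>: "\<alpha> - Poly_Mapping.single i 1 + Poly_Mapping.single i 1 = \<alpha>"
    using pos by (rule add_var_diff_cancel)
  have "\<alpha> - Poly_Mapping.single i 1 + \<beta> + Poly_Mapping.single i 1 =
      \<alpha> - Poly_Mapping.single i 1 + Poly_Mapping.single i 1 + \<beta>"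
    by (simp only: add.assoc add.commute[of \<beta>])
  also have "\<dots> = \<mu> + Poly_Mapping.single i 1"
    by (simp only: \<alpha> x(2))
  finally have "\<alpha> - Poly_Mapping.single i 1 + \<beta> = \<mu>"
    by (rule add_right_imp_eq)
  with x \<alpha> show "(case x of (\<alpha>, \<beta>) \<Rightarrow> (\<alpha> - Poly_Mapping.single i 1, \<beta>)) \<in> splits \<mu>"
    and "(case case x of (\<alpha>, \<beta>) \<Rightarrow> (\<alpha> - Poly_Mapping.single i 1, \<beta>) of (\<alpha>, \<beta>) \<Rightarrow> (\<alpha> + Poly_Mapping.single i 1, \<beta>)) = x"
    and "(case case x of (\<alpha>, \<beta>) \<Rightarrow> (\<alpha> - Poly_Mapping.single i 1, \<beta>) of (\<alpha>, \<beta>) \<Rightarrow> f (\<alpha> + Poly_Mapping.single i 1) \<beta>) =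
      (case x of (\<alpha>, \<beta>) \<Rightarrow> f \<alpha> \<beta>)"
    by (simp_all add: splits_iff)
qed (auto simp: splits_iff lookup_add add_ac)

lemma sweedler_add_var:
  fixes \<mu> :: mono and g :: "mono \<Rightarrow> mono \<Rightarrow> 'b::comm_semiring_1"
  shows "sweedler (\<mu> + Poly_Mapping.single i 1) g =
    sweedler \<mu> (\<lambda>\<alpha> \<beta>. g (\<alpha> + Poly_Mapping.single i 1) \<beta> + g \<alpha> (\<beta> + Poly_Mapping.single i 1))"
proof -
  define e :: mono where "e = Poly_Mapping.single i 1"
  let ?S = "splits (\<mu> + e)"
  let ?L = "{x\<in>?S. 0 < Poly_Mapping.lookup (fst x) i}"
  let ?R = "{x\<in>?S. 0 < Poly_Mapping.lookup (snd x) i}"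
  have "sweedler (\<mu> + e) g =
      (\<Sum>(\<alpha>, \<beta>)\<in>?S. if 0 < Poly_Mapping.lookup \<alpha> i then of_nat (bcoef \<mu> (\<alpha> - e)) * g \<alpha> \<beta> else 0) +
      (\<Sum>(\<alpha>, \<beta>)\<in>?S. if 0 < Poly_Mapping.lookup \<beta> i then of_nat (bcoef \<mu> \<alpha>) * g \<alpha> \<beta> else 0)"
    unfolding sweedler_def sum.distrib[symmetric]
  proof (intro sum.cong refl)
    fix x assume "x \<in> ?S"
    then obtain \<alpha> \<beta> where "x = (\<alpha>, \<beta>)" "\<alpha> + \<beta> = \<mu> + e"
      by (cases x) (auto simp: splits_iff)
    then show "(case x of (\<alpha>, \<beta>) \<Rightarrow> of_nat (bcoef (\<mu> + e) \<alpha>) * g \<alpha> \<beta>) =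
      (case x of (\<alpha>, \<beta>) \<Rightarrow> if 0 < Poly_Mapping.lookup \<alpha> i then of_nat (bcoef \<mu> (\<alpha> - e)) * g \<alpha> \<beta> else 0) +
      (case x of (\<alpha>, \<beta>) \<Rightarrow> if 0 < Poly_Mapping.lookup \<beta> i then of_nat (bcoef \<mu> \<alpha>) * g \<alpha> \<beta> else 0)"
      using bcoef_add_var[of \<alpha> \<beta> \<mu> i] unfolding e_def by (simp add: distrib_right)
  qed
  also have "\<dots> = (\<Sum>(\<alpha>, \<beta>)\<in>?L. of_nat (bcoef \<mu> (\<alpha> - e)) * g \<alpha> \<beta>) +
      (\<Sum>(\<alpha>, \<beta>)\<in>?R. of_nat (bcoef \<mu> \<alpha>) * g \<alpha> \<beta>)"
    by (simp add: sum.inter_filter finite_splits case_prod_unfold if_distrib)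
  also have "(\<Sum>(\<alpha>, \<beta>)\<in>?R. of_nat (bcoef \<mu> \<alpha>) * g \<alpha> \<beta>) =
      (\<Sum>(\<beta>, \<alpha>)\<in>?L. of_nat (bcoef \<mu> \<alpha>) * g \<alpha> \<beta>)"
    by (rule sum.reindex_bij_witness[where i = prod.swap and j = prod.swap]) (auto simp: splits_iff add.commute)
  also have "\<dots> = (\<Sum>(\<beta>, \<alpha>)\<in>splits \<mu>. of_nat (bcoef \<mu> \<alpha>) * g \<alpha> (\<beta> + e))"
    unfolding e_def by (rule sum_splits_add_var)
  also have "\<dots> = (\<Sum>(\<alpha>, \<beta>)\<in>splits \<mu>. of_nat (bcoef \<mu> \<alpha>) * g \<alpha> (\<beta> + e))"
    by (rule sum_splits_swap)
  also have "(\<Sum>(\<alpha>, \<beta>)\<in>?L. of_nat (bcoef \<mu> (\<alpha> - e)) * g \<alpha> \<beta>) =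
      (\<Sum>(\<alpha>, \<beta>)\<in>splits \<mu>. of_nat (bcoef \<mu> \<alpha>) * g (\<alpha> + e) \<beta>)"
    unfolding e_def by (subst sum_splits_add_var) simp
  finally show ?thesis
    by (simp add: sweedler_def e_def sum.distrib distrib_left case_prod_unfold)
qed

lemma sweedler_0: "sweedler 0 g = g 0 0"
  by (simp add: sweedler_def splits_0 bcoef_def)

lemma sweedler_var_monom:
  fixes g :: "mono \<Rightarrow> mono \<Rightarrow> 'b::comm_semiring_1"
  assumes "finite P"
  shows "sweedler (var_monom w P) g = (\<Sum>S\<in>Pow P. g (var_monom w S) (var_monom w (P - S)))"
  using assms
proof (induction P arbitrary: g rule: finite_induct)
  case empty
  then show ?case by (simp add: sweedler_0)
next
  case (insert x P)
  define e where "e = Poly_Mapping.single (w x) (1::nat)"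
  have fin: "finite S" if "S \<in> Pow P" for S
    using insert(1) that finite_subset by blast
  have add_x: "var_monom w (insert x S) = var_monom w S + e" if "finite S" "x \<notin> S" for S
    using that by (simp add: var_monom_insert e_def add.commute)
  have "sweedler (var_monom w (insert x P)) g =
      sweedler (var_monom w P) (\<lambda>\<alpha> \<beta>. g (\<alpha> + e) \<beta> + g \<alpha> (\<beta> + e))"
    unfolding add_x[OF insert(1,2)] e_def by (rule sweedler_add_var)
  also have "\<dots> = (\<Sum>S\<in>Pow P. g (var_monom w (insert x S)) (var_monom w (insert x P - insert x S))) +
      (\<Sum>S\<in>Pow P. g (var_monom w S) (var_monom w (insert x P - S)))"
  proof -
    have "var_monom w (insert x S) = var_monom w S + e"
      and "insert x P - insert x S = P - S"
      and "var_monom w (insert x P - S) = var_monom w (P - S) + e" if "S \<in> Pow P" for S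
    proof -
      have "x \<notin> S" "x \<notin> P - S" "insert x P - S = insert x (P - S)" "finite (P - S)"
        using that insert(1,2) by auto
      then show "var_monom w (insert x S) = var_monom w S + e"
        and "insert x P - insert x S = P - S"
        and "var_monom w (insert x P - S) = var_monom w (P - S) + e"
        using add_x fin[OF that] by simp_all
    qed
    then show ?thesis
      by (simp add: insert.IH sum.distrib)
  qed
  also have "\<dots> = (\<Sum>S\<in>Pow (insert x P). g (var_monom w S) (var_monom w (insert x P - S)))"
  proof -
    have "Pow P \<inter> insert x ` Pow P = {}" and "inj_on (insert x) (Pow P)"
      using insert(2) by (auto simp: inj_on_def)
    then show ?thesis
      using insert(1) by (simp add: Pow_insert sum.union_disjoint sum.reindex add.commute)
  qed
  finally show ?case .
qed

section \<open>Colourings\<close>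

definition colourings :: "nat set \<Rightarrow> nat \<Rightarrow> (nat \<Rightarrow> nat) set" where
  "colourings P k = {c. (\<forall>x\<in>P. c x < k) \<and> (\<forall>x. x \<notin> P \<longrightarrow> c x = 0)}"

definition colour_class :: "nat set \<Rightarrow> (nat \<Rightarrow> nat) \<Rightarrow> nat \<Rightarrow> nat set" where
  "colour_class P c j = {x\<in>P. c x = j}"

definition merge_colour :: "nat \<Rightarrow> nat \<Rightarrow> (nat \<Rightarrow> nat) \<Rightarrow> nat \<Rightarrow> nat" where
  "merge_colour k j d = (\<lambda>x. if d x = k then j else d x)"

lemma finite_colourings: "finite P \<Longrightarrow> finite (colourings P k)"
proof -
  assume "finite P"
  then have "finite {f. \<forall>x. (x \<in> P \<longrightarrow> f x \<in> {..<k}) \<and> (x \<notin> P \<longrightarrow> f x = 0)}"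
    by (intro finite_set_of_finite_funs) auto
  moreover have "colourings P k = {f. \<forall>x. (x \<in> P \<longrightarrow> f x \<in> {..<k}) \<and> (x \<notin> P \<longrightarrow> f x = 0)}"
    by (auto simp: colourings_def)
  ultimately show ?thesis
    by simp
qed

lemma finite_colour_class: "finite P \<Longrightarrow> finite (colour_class P c j)"
  by (simp add: colour_class_def)

lemma colourings_1: "colourings P (Suc 0) = {\<lambda>x. 0}"
  by (auto simp: colourings_def fun_eq_iff)

lemma colour_class_merge_colour:
  "i \<noteq> k \<Longrightarrow> colour_class P (merge_colour k j d) i =
    (if i = j then colour_class P d j \<union> colour_class P d k else colour_class P d i)"
  by (auto simp: colour_class_def merge_colour_def)

lemma colour_class_union_diff:
  "j \<noteq> k \<Longrightarrow> colour_class P d j \<union> colour_class P d k - colour_class P d k = colour_class P d j"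
  by (auto simp: colour_class_def)

text \<open>Splitting colour class \<open>j\<close> of a \<open>k\<close>-colouring into a subset and its complement is the same
  as choosing a \<open>(k+1)\<close>-colouring: the subset receives the new colour \<open>k\<close>.\<close>

lemma sum_colourings_refine:
  assumes "finite P" "j < k"
  shows "(\<Sum>c\<in>colourings P k. \<Sum>S\<in>Pow (colour_class P c j). F c S) =
    (\<Sum>d\<in>colourings P (Suc k). F (merge_colour k j d) (colour_class P d k))"
proof -
  have "(\<Sum>c\<in>colourings P k. \<Sum>S\<in>Pow (colour_class P c j). F c S) =
      (\<Sum>(c, S)\<in>Sigma (colourings P k) (\<lambda>c. Pow (colour_class P c j)). F c S)"
    using assms(1) by (simp add: sum.Sigma finite_colourings finite_colour_class)
  also have "\<dots> = (\<Sum>d\<in>colourings P (Suc k). F (merge_colour k j d) (colour_class P d k))"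
  proof (rule sum.reindex_bij_witness[where i = "\<lambda>d. (merge_colour k j d, colour_class P d k)"
        and j = "\<lambda>(c, S) x. if x \<in> S then k else c x"])
    fix p assume "p \<in> Sigma (colourings P k) (\<lambda>c. Pow (colour_class P c j))"
    then obtain c S where p: "p = (c, S)" "c \<in> colourings P k" "S \<subseteq> colour_class P c j"
      by auto
    have "c x \<noteq> k" for x
      using p(2) assms(2) by (cases "x \<in> P") (auto simp: colourings_def)
    then have m: "merge_colour k j (\<lambda>x. if x \<in> S then k else c x) = c"
      and cl: "colour_class P (\<lambda>x. if x \<in> S then k else c x) k = S"
      using p(3) by (auto simp: merge_colour_def colour_class_def fun_eq_iff)
    show "(merge_colour k j ((\<lambda>(c, S) x. if x \<in> S then k else c x) p),
        colour_class P ((\<lambda>(c, S) x. if x \<in> S then k else c x) p) k) = p"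
      and "F (merge_colour k j ((\<lambda>(c, S) x. if x \<in> S then k else c x) p))
        (colour_class P ((\<lambda>(c, S) x. if x \<in> S then k else c x) p) k) = (case p of (c, S) \<Rightarrow> F c S)"
      by (simp_all add: p(1) m cl)
    show "(\<lambda>(c, S) x. if x \<in> S then k else c x) p \<in> colourings P (Suc k)"
      using p by (auto simp: colourings_def colour_class_def)
  next
    fix d assume d: "d \<in> colourings P (Suc k)"
    then show "(\<lambda>(c, S) x. if x \<in> S then k else c x) (merge_colour k j d, colour_class P d k) = d"
      using assms(2) by (auto simp: merge_colour_def colour_class_def colourings_def fun_eq_iff)
    show "(merge_colour k j d, colour_class P d k) \<in> Sigma (colourings P k) (\<lambda>c. Pow (colour_class P c j))"
      using d assms(2) by (auto simp: colourings_def colour_class_def merge_colour_def less_Suc_eq)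
  qed
  finally show ?thesis .
qed

lemma sum_colourings_refine_inner:
  assumes "finite P" "j < k"
  shows "(\<Sum>c\<in>colourings P k. \<Sum>y\<in>B. \<Sum>S\<in>Pow (colour_class P c j). F c y S) =
    (\<Sum>d\<in>colourings P (Suc k). \<Sum>y\<in>B. F (merge_colour k j d) y (colour_class P d k))"
  by (subst sum_colourings_refine[OF assms, symmetric]) (simp add: sum.swap[of _ B])

lemma sum_colourings_refine_inner2:
  assumes "finite P" "j < k"
  shows "(\<Sum>c\<in>colourings P k. \<Sum>y\<in>B. \<Sum>z\<in>C. \<Sum>S\<in>Pow (colour_class P c j). F c y z S) =
    (\<Sum>d\<in>colourings P (Suc k). \<Sum>y\<in>B. \<Sum>z\<in>C. F (merge_colour k j d) y z (colour_class P d k))"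
  by (subst sum_colourings_refine_inner[OF assms, symmetric]) (simp add: sum.swap[of _ C])

lemma sum_colourings_1: "F (var_monom w P) = (\<Sum>c\<in>colourings P 1. F (var_monom w (colour_class P c 0)))"
  by (simp add: colourings_1 colour_class_def)

lemma sum_colourings_1_2:
  "F (var_monom w P) (var_monom w' Q) =
    (\<Sum>c\<in>colourings P 1. \<Sum>d\<in>colourings Q 1.
      F (var_monom w (colour_class P c 0)) (var_monom w' (colour_class Q d 0)))"
  by (simp add: colourings_1 colour_class_def)

lemma sum_colourings_1_3:
  "F (var_monom w P) (var_monom w' Q) (var_monom w'' R) =
    (\<Sum>c\<in>colourings P 1. \<Sum>d\<in>colourings Q 1. \<Sum>e\<in>colourings R 1.
      F (var_monom w (colour_class P c 0)) (var_monom w' (colour_class Q d 0))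
        (var_monom w'' (colour_class R e 0)))"
  by (simp add: colourings_1 colour_class_def)

lemma sweedler_var_monom_colour_class:
  "finite P \<Longrightarrow> sweedler (var_monom w (colour_class P c j)) g =
    (\<Sum>T\<in>Pow (colour_class P c j). g (var_monom w T) (var_monom w (colour_class P c j - T)))"
  by (simp add: sweedler_var_monom finite_colour_class)

lemma sweedler_var_monom_colourings:
  assumes "finite P"
  shows "sweedler (var_monom w P) g =
    (\<Sum>c\<in>colourings P 2. g (var_monom w (colour_class P c 1)) (var_monom w (colour_class P c 0)))"
proof -
  have "sweedler (var_monom w P) g =
      (\<Sum>c\<in>colourings P 1. \<Sum>S\<in>Pow (colour_class P c 0). g (var_monom w S) (var_monom w (colour_class P c 0 - S)))"
    using assms by (simp add: sweedler_var_monom colourings_1 colour_class_def)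
  also have "\<dots> = (\<Sum>c\<in>colourings P 2. g (var_monom w (colour_class P c 1)) (var_monom w (colour_class P c 0)))"
    using assms
    by (simp add: sum_colourings_refine numeral_2_eq_2 colour_class_merge_colour colour_class_union_diff)
  finally show ?thesis .
qed

lemmas colouring_simps = colour_class_merge_colour colour_class_union_diff sweedler_var_monom_colour_class
  sum_colourings_refine sum_colourings_refine_inner sum_colourings_refine_inner2
  sum_distrib_left sum_distrib_right eval_nat_numeral

fun index_of :: "'a list \<Rightarrow> 'a \<Rightarrow> nat" where
  "index_of [] a = 0"
| "index_of (x # xs) a = (if x = a then 0 else Suc (index_of xs a))"

lemma nth_index_of: "a \<in> set xs \<Longrightarrow> xs ! index_of xs a = a"
  by (induction xs) auto

lemma index_of_less: "a \<in> set xs \<Longrightarrow> index_of xs a < length xs"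
  by (induction xs) auto

lemma index_of_nth: "distinct xs \<Longrightarrow> j < length xs \<Longrightarrow> index_of xs (xs ! j) = j"
proof (induction xs arbitrary: j)
  case (Cons x xs)
  then show ?case by (cases j) (auto simp: nth_mem)
qed simp

definition permute_colours :: "nat list \<Rightarrow> nat set \<Rightarrow> (nat \<Rightarrow> nat) \<Rightarrow> nat \<Rightarrow> nat" where
  "permute_colours p P c = (\<lambda>x. if x \<in> P then p ! c x else 0)"

definition colour_perm :: "nat list \<Rightarrow> nat \<Rightarrow> bool" where
  "colour_perm p k \<longleftrightarrow> length p = k \<and> distinct p \<and> (\<forall>x\<in>set p. x < k)"

lemma colour_perm_set:
  assumes "colour_perm p k"
  shows "set p = {..<k}"
proof (rule card_subset_eq)
  show "set p \<subseteq> {..<k}" and "card (set p) = card {..<k}"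
    using assms by (auto simp: colour_perm_def distinct_card)
qed simp

lemma colour_perm_inverse:
  assumes "colour_perm p k" "y < k"
  shows "p ! y < k" "index_of p y < k" "p ! index_of p y = y" "index_of p (p ! y) = y"
proof -
  have p: "set p = {..<k}" "length p = k" "distinct p"
    using colour_perm_set[OF assms(1)] assms(1) by (simp_all add: colour_perm_def)
  moreover have "y \<in> set p"
    using p(1) assms(2) by simp
  ultimately show "p ! y < k" "index_of p y < k" "p ! index_of p y = y" "index_of p (p ! y) = y"
    using assms(2) nth_mem[of y p] index_of_less[of y p] nth_index_of[of y p] index_of_nth[of p y]
    by simp_all
qed

lemma sum_colourings_permute:
  assumes "colour_perm p k"
  shows "(\<Sum>c\<in>colourings P k. F c) = (\<Sum>c\<in>colourings P k. F (permute_colours p P c))"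
proof (rule sum.reindex_bij_witness[where i = "permute_colours p P"
      and j = "permute_colours (map (index_of p) [0..<k]) P"])
  fix c assume c: "c \<in> colourings P k"
  let ?q = "map (index_of p) [0..<k]"
  have q: "?q ! c x = index_of p (c x)" if "x \<in> P" for x
    using c that by (simp add: colourings_def)
  have "permute_colours p P (permute_colours ?q P c) = c"
    using c q colour_perm_inverse(3)[OF assms] by (auto simp: permute_colours_def colourings_def fun_eq_iff)
  then show "permute_colours p P (permute_colours ?q P c) = c"
    and "F (permute_colours p P (permute_colours ?q P c)) = F c"
    by simp_all
  show "permute_colours ?q P (permute_colours p P c) = c"
    using c colour_perm_inverse(1,4)[OF assms] by (auto simp: permute_colours_def colourings_def fun_eq_iff)
  show "permute_colours ?q P c \<in> colourings P k"
    using c q colour_perm_inverse(2)[OF assms] by (auto simp: permute_colours_def colourings_def)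
  show "permute_colours p P c \<in> colourings P k"
    using c colour_perm_inverse(1)[OF assms] by (auto simp: permute_colours_def colourings_def)
qed

lemma colour_class_permute_colours:
  assumes "colour_perm p (length p)" "c \<in> colourings P (length p)" "i < length p"
  shows "colour_class P (permute_colours p P c) i = colour_class P c (index_of p i)"
proof -
  have "p ! y = i \<longleftrightarrow> y = index_of p i" if "y < length p" for y
  proof
    assume "p ! y = i"
    then show "y = index_of p i"
      using colour_perm_inverse(4)[OF assms(1) that] by simp
  next
    assume "y = index_of p i"
    then show "p ! y = i"
      using colour_perm_inverse(3)[OF assms(1,3)] by simp
  qed
  then show ?thesis
    using assms(2) by (auto simp: colour_class_def colourings_def permute_colours_def)
qed

lemma sum_colourings_permute_eq:
  assumes "colour_perm p k" "\<And>c. c \<in> colourings P k \<Longrightarrow> F (permute_colours p P c) = G c"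
  shows "(\<Sum>c\<in>colourings P k. F c) = (\<Sum>c\<in>colourings P k. G c)"
  by (subst sum_colourings_permute[OF assms(1)]) (rule sum.cong, simp_all add: assms(2))

lemma sum_colourings_permute_eq2:
  assumes "colour_perm p k" "colour_perm q l"
    "\<And>c d. c \<in> colourings P k \<Longrightarrow> d \<in> colourings Q l \<Longrightarrow>
      F (permute_colours p P c) (permute_colours q Q d) = G c d"
  shows "(\<Sum>c\<in>colourings P k. \<Sum>d\<in>colourings Q l. F c d) = (\<Sum>c\<in>colourings P k. \<Sum>d\<in>colourings Q l. G c d)"
  by (intro sum_colourings_permute_eq[OF assms(1)] sum_colourings_permute_eq[OF assms(2)] assms(3))

lemma sum_colourings_permute_eq3:
  assumes "colour_perm p k" "colour_perm q l" "colour_perm p' k'"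
    "\<And>c d e. c \<in> colourings P k \<Longrightarrow> d \<in> colourings Q l \<Longrightarrow> e \<in> colourings R k' \<Longrightarrow>
      F (permute_colours p P c) (permute_colours q Q d) (permute_colours p' R e) = G c d e"
  shows "(\<Sum>c\<in>colourings P k. \<Sum>d\<in>colourings Q l. \<Sum>e\<in>colourings R k'. F c d e) =
    (\<Sum>c\<in>colourings P k. \<Sum>d\<in>colourings Q l. \<Sum>e\<in>colourings R k'. G c d e)"
  by (intro sum_colourings_permute_eq[OF assms(1)] sum_colourings_permute_eq[OF assms(2)]
      sum_colourings_permute_eq[OF assms(3)] assms(4))

section \<open>Identities for Sweedler sums\<close>

lemma sweedler_cong: "(\<And>\<alpha> \<beta>. \<alpha> + \<beta> = \<mu> \<Longrightarrow> f \<alpha> \<beta> = g \<alpha> \<beta>) \<Longrightarrow> sweedler \<mu> f = sweedler \<mu> g"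
  unfolding sweedler_def by (rule sum.cong) (auto simp: splits_def)

lemma sweedler_mult_left: "k * sweedler \<mu> g = sweedler \<mu> (\<lambda>\<alpha> \<beta>. k * g \<alpha> \<beta>)"
  by (simp add: sweedler_def sum_distrib_left case_prod_unfold mult_ac)

lemma sweedler_mult_right: "sweedler \<mu> g * k = sweedler \<mu> (\<lambda>\<alpha> \<beta>. g \<alpha> \<beta> * k)"
  by (simp add: sweedler_def sum_distrib_right case_prod_unfold mult.assoc)

lemma additive_of_nat_mult:
  assumes "\<And>x y. h (x + y) = h x + h y" "h 0 = 0"
  shows "h (of_nat n * x) = of_nat n * h x"
  by (induction n) (simp_all add: assms algebra_simps)

lemma sweedler_additive:
  fixes h :: "'b::comm_semiring_1 \<Rightarrow> 'c::comm_semiring_1"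
  assumes "\<And>x y. h (x + y) = h x + h y" "h 0 = 0"
  shows "h (sweedler \<mu> g) = sweedler \<mu> (\<lambda>\<alpha> \<beta>. h (g \<alpha> \<beta>))"
  unfolding sweedler_def sum_comp_morphism[of h, OF assms(2,1), symmetric]
  by (simp add: additive_of_nat_mult[of h, OF assms] case_prod_unfold)

lemma sweedler_swap_order:
  "sweedler \<mu> (\<lambda>\<alpha> \<beta>. sweedler \<nu> (g \<alpha> \<beta>)) = sweedler \<nu> (\<lambda>\<gamma> \<delta>. sweedler \<mu> (\<lambda>\<alpha> \<beta>. g \<alpha> \<beta> \<gamma> \<delta>))"
  unfolding sweedler_def case_prod_unfold sum_distrib_left
  by (subst sum.swap) (simp add: mult_ac)

lemma sweedler_counit_left:
  fixes g :: "mono \<Rightarrow> 'b::comm_ring_1"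
  shows "sweedler \<mu> (\<lambda>\<alpha> \<beta>. counit \<alpha> * g \<beta>) = g \<mu>"
proof -
  have "sweedler \<mu> (\<lambda>\<alpha> \<beta>. counit \<alpha> * g \<beta>) = (\<Sum>(\<alpha>, \<beta>)\<in>{(0, \<mu>)}. of_nat (bcoef \<mu> \<alpha>) * (counit \<alpha> * g \<beta>))"
    unfolding sweedler_def case_prod_unfold
    by (rule sum.mono_neutral_right) (use finite_splits[of \<mu>] in \<open>auto simp: splits_def counit_def\<close>)
  then show ?thesis
    by (simp add: bcoef_def counit_def)
qed

lemma sweedler_counit_right:
  fixes g :: "mono \<Rightarrow> 'b::comm_ring_1"
  shows "sweedler \<mu> (\<lambda>\<alpha> \<beta>. g \<alpha> * counit \<beta>) = g \<mu>"
proof -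
  have "sweedler \<mu> (\<lambda>\<alpha> \<beta>. g \<alpha> * counit \<beta>) = (\<Sum>(\<alpha>, \<beta>)\<in>{(\<mu>, 0)}. of_nat (bcoef \<mu> \<alpha>) * (g \<alpha> * counit \<beta>))"
    unfolding sweedler_def case_prod_unfold
    by (rule sum.mono_neutral_right) (use finite_splits[of \<mu>] in \<open>auto simp: splits_def counit_def\<close>)
  then show ?thesis
    by (simp add: bcoef_def counit_def)
qed

lemma sweedler_commute: "sweedler \<mu> g = sweedler \<mu> (\<lambda>\<alpha> \<beta>. g \<beta> \<alpha>)"
proof -
  obtain w P where P: "finite P" "var_monom w P = \<mu>"
    by (rule var_monom_finite_rep)
  have "sweedler \<mu> g = (\<Sum>c\<in>colourings P 2. g (var_monom w (colour_class P c 1)) (var_monom w (colour_class P c 0)))"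
    using P(1) by (simp add: P(2)[symmetric] sweedler_var_monom_colourings)
  also have "\<dots> = (\<Sum>c\<in>colourings P 2. g (var_monom w (colour_class P c 0)) (var_monom w (colour_class P c 1)))"
    by (rule sum_colourings_permute_eq[where p = "[1, 0]"])
      (simp_all add: colour_perm_def colour_class_permute_colours eval_nat_numeral)
  also have "\<dots> = sweedler \<mu> (\<lambda>\<alpha> \<beta>. g \<beta> \<alpha>)"
    using P(1) by (simp add: P(2)[symmetric] sweedler_var_monom_colourings)
  finally show ?thesis .
qed

lemma sum_Pow_union:
  assumes "P \<inter> Q = {}"
  shows "(\<Sum>S\<in>Pow (P \<union> Q). F S) = (\<Sum>S1\<in>Pow P. \<Sum>S2\<in>Pow Q. F (S1 \<union> S2))"
proof -
  have "(\<Sum>S1\<in>Pow P. \<Sum>S2\<in>Pow Q. F (S1 \<union> S2)) = (\<Sum>p\<in>Pow P \<times> Pow Q. F (fst p \<union> snd p))"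
    by (simp add: sum.cartesian_product case_prod_unfold)
  also have "\<dots> = (\<Sum>S\<in>Pow (P \<union> Q). F S)"
    by (rule sum.reindex_bij_witness[where i = "\<lambda>S. (S \<inter> P, S \<inter> Q)" and j = "\<lambda>p. fst p \<union> snd p"])
      (use assms in auto)
  finally show ?thesis
    by simp
qed

lemma sweedler_add_monom:
  "sweedler (\<mu> + \<nu>) g = sweedler \<mu> (\<lambda>\<alpha>1 \<alpha>2. sweedler \<nu> (\<lambda>\<beta>1 \<beta>2. g (\<alpha>1 + \<beta>1) (\<alpha>2 + \<beta>2)))"
proof -
  obtain w P where P: "finite P" "var_monom w P = \<mu>"
    by (rule var_monom_finite_rep)
  obtain Q w' where Q: "finite Q" "P \<inter> Q = {}" "\<And>x. x \<in> P \<Longrightarrow> w' x = w x" "var_monom w' Q = \<nu>"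
    using var_monom_extend[OF P(1), where w = w and \<nu> = \<nu>] by metis
  have \<mu>: "var_monom w' P = \<mu>"
    using P(2) var_monom_cong[of P w' w] Q(3) by simp
  have fin: "finite S" if "S \<in> Pow A" "finite A" for S A
    using that finite_subset by blast
  have "\<mu> + \<nu> = var_monom w' (P \<union> Q)"
    using var_monom_union[OF P(1) Q(1,2)] \<mu> Q(4) by simp
  then have "sweedler (\<mu> + \<nu>) g = (\<Sum>S\<in>Pow (P \<union> Q). g (var_monom w' S) (var_monom w' (P \<union> Q - S)))"
    using P(1) Q(1) by (simp add: sweedler_var_monom)
  also have "\<dots> = (\<Sum>S1\<in>Pow P. \<Sum>S2\<in>Pow Q.
      g (var_monom w' (S1 \<union> S2)) (var_monom w' (P \<union> Q - (S1 \<union> S2))))"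
    by (rule sum_Pow_union[OF Q(2)])
  also have "\<dots> = (\<Sum>S1\<in>Pow P. \<Sum>S2\<in>Pow Q.
      g (var_monom w' S1 + var_monom w' S2) (var_monom w' (P - S1) + var_monom w' (Q - S2)))"
  proof (intro sum.cong refl)
    fix S1 S2 assume S: "S1 \<in> Pow P" "S2 \<in> Pow Q"
    have "P \<union> Q - (S1 \<union> S2) = (P - S1) \<union> (Q - S2)" and "S1 \<inter> S2 = {}" and "(P - S1) \<inter> (Q - S2) = {}"
      using S Q(2) by auto
    then show "g (var_monom w' (S1 \<union> S2)) (var_monom w' (P \<union> Q - (S1 \<union> S2))) =
        g (var_monom w' S1 + var_monom w' S2) (var_monom w' (P - S1) + var_monom w' (Q - S2))"
      using fin[OF S(1) P(1)] fin[OF S(2) Q(1)] P(1) Q(1) by (simp add: var_monom_union)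
  qed
  also have "\<dots> = sweedler \<mu> (\<lambda>\<alpha>1 \<alpha>2. sweedler \<nu> (\<lambda>\<beta>1 \<beta>2. g (\<alpha>1 + \<beta>1) (\<alpha>2 + \<beta>2)))"
    unfolding \<mu>[symmetric] Q(4)[symmetric] using P(1) Q(1)
    by (simp add: sweedler_var_monom fin cong: sum.cong)
  finally show ?thesis .
qed

lemma sweedler_binomial:
  fixes x y :: "'b::comm_semiring_1"
  shows "sweedler \<mu> (\<lambda>\<alpha> \<beta>. x ^ total_deg \<alpha> * y ^ total_deg \<beta>) = (x + y) ^ total_deg \<mu>"
proof -
  have "sweedler (var_monom w {..<n}) (\<lambda>\<alpha> \<beta>. x ^ total_deg \<alpha> * y ^ total_deg \<beta>) = (x + y) ^ n" for w n
  proof (induction n)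
    case 0
    then show ?case by (simp add: sweedler_0)
  next
    case (Suc n)
    have n: "var_monom w {..<Suc n} = var_monom w {..<n} + Poly_Mapping.single (w n) 1"
      by (simp add: lessThan_Suc var_monom_insert add.commute)
    have "sweedler (var_monom w {..<Suc n}) (\<lambda>\<alpha> \<beta>. x ^ total_deg \<alpha> * y ^ total_deg \<beta>) =
        sweedler (var_monom w {..<n}) (\<lambda>\<alpha> \<beta>. (x + y) * (x ^ total_deg \<alpha> * y ^ total_deg \<beta>))"
      unfolding n sweedler_add_var by (rule sweedler_cong) (simp add: total_deg_add algebra_simps)
    also have "\<dots> = (x + y) ^ Suc n"
      by (simp add: sweedler_mult_left[symmetric] Suc)
    finally show ?case .
  qed
  moreover obtain w n where "var_monom w {..<n} = \<mu>"
    using var_monom_surj by blast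
  ultimately show ?thesis
    using total_deg_var_monom[of "{..<n}" w] by fastforce
qed

section \<open>The group of bicharacters\<close>

lemma bichar_zero_left: "is_bichar r \<Longrightarrow> r 0 \<alpha> = counit \<alpha>"
  by (simp add: is_bichar_def)

lemma bichar_zero_right: "is_bichar r \<Longrightarrow> r \<alpha> 0 = counit \<alpha>"
  by (simp add: is_bichar_def)

lemma bichar_add_left: "is_bichar r \<Longrightarrow> r (\<alpha> + \<beta>) \<gamma> = sweedler \<gamma> (\<lambda>\<delta> \<epsilon>. r \<alpha> \<delta> * r \<beta> \<epsilon>)"
  unfolding is_bichar_def sweedler_def by (simp add: mult.assoc)

lemma bichar_add_right: "is_bichar r \<Longrightarrow> r \<alpha> (\<beta> + \<gamma>) = sweedler \<alpha> (\<lambda>\<delta> \<epsilon>. r \<delta> \<beta> * r \<epsilon> \<gamma>)"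
  unfolding is_bichar_def sweedler_def by (simp add: mult.assoc)

lemma is_bicharI:
  assumes "\<And>\<alpha>. r 0 \<alpha> = counit \<alpha>" "\<And>\<alpha>. r \<alpha> 0 = counit \<alpha>"
    "\<And>\<alpha> \<beta> \<gamma>. r (\<alpha> + \<beta>) \<gamma> = sweedler \<gamma> (\<lambda>\<delta> \<epsilon>. r \<alpha> \<delta> * r \<beta> \<epsilon>)"
    "\<And>\<alpha> \<beta> \<gamma>. r \<alpha> (\<beta> + \<gamma>) = sweedler \<alpha> (\<lambda>\<delta> \<epsilon>. r \<delta> \<beta> * r \<epsilon> \<gamma>)"
  shows "is_bichar r"
  using assms unfolding is_bichar_def sweedler_def by (simp add: mult.assoc)

lemma is_bichar_transp: "is_bichar r \<Longrightarrow> is_bichar (transp_bichar r)"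
  by (rule is_bicharI) (simp_all add: transp_bichar_def bichar_zero_left bichar_zero_right
      bichar_add_left bichar_add_right)

text \<open>The convolution product \<open>(r t)(a \<otimes> b) = \<Sum> r(a' \<otimes> b') t(a'' \<otimes> b'')\<close>, which makes the
  bicharacters a commutative group with unit \<^const>\<open>std_bichar\<close>.\<close>

definition bichar_conv :: "(mono \<Rightarrow> mono \<Rightarrow> 'a::comm_ring_1) \<Rightarrow> (mono \<Rightarrow> mono \<Rightarrow> 'a) \<Rightarrow> mono \<Rightarrow> mono \<Rightarrow> 'a" where
  "bichar_conv r t \<alpha> \<beta> = sweedler \<alpha> (\<lambda>\<alpha>1 \<alpha>2. sweedler \<beta> (\<lambda>\<beta>1 \<beta>2. r \<alpha>1 \<beta>1 * t \<alpha>2 \<beta>2))"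

text \<open>For a bicharacter \<open>s\<close>, \<open>deg_scale x s\<close> plays the role of the convolution power \<open>s\<^sup>x\<close>.\<close>

definition deg_scale :: "'a::comm_ring_1 \<Rightarrow> (mono \<Rightarrow> mono \<Rightarrow> 'a) \<Rightarrow> mono \<Rightarrow> mono \<Rightarrow> 'a" where
  "deg_scale x s \<alpha> \<beta> = x ^ total_deg \<alpha> * s \<alpha> \<beta>"

lemma bichar_conv_commute: "bichar_conv r t = bichar_conv t r"
proof (intro ext)
  fix \<alpha> \<beta>
  have "bichar_conv r t \<alpha> \<beta> = sweedler \<alpha> (\<lambda>\<alpha>1 \<alpha>2. sweedler \<beta> (\<lambda>\<beta>1 \<beta>2. r \<alpha>2 \<beta>1 * t \<alpha>1 \<beta>2))"
    unfolding bichar_conv_def by (subst sweedler_commute) (rule refl)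
  also have "\<dots> = sweedler \<alpha> (\<lambda>\<alpha>1 \<alpha>2. sweedler \<beta> (\<lambda>\<beta>1 \<beta>2. r \<alpha>2 \<beta>2 * t \<alpha>1 \<beta>1))"
    by (subst sweedler_commute) (rule refl)
  also have "\<dots> = bichar_conv t r \<alpha> \<beta>"
    unfolding bichar_conv_def by (simp add: mult.commute)
  finally show "bichar_conv r t \<alpha> \<beta> = bichar_conv t r \<alpha> \<beta>" .
qed

lemma transp_bichar_conv: "transp_bichar (bichar_conv r t) = bichar_conv (transp_bichar r) (transp_bichar t)"
  unfolding transp_bichar_def bichar_conv_def by (intro ext) (rule sweedler_swap_order)

lemma bichar_conv_std: "bichar_conv r std_bichar = r"
proof (intro ext)
  fix \<alpha> \<beta>
  have "bichar_conv r std_bichar \<alpha> \<beta> =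
      sweedler \<alpha> (\<lambda>\<alpha>1 \<alpha>2. counit \<alpha>2 * sweedler \<beta> (\<lambda>\<beta>1 \<beta>2. r \<alpha>1 \<beta>1 * counit \<beta>2))"
    unfolding bichar_conv_def std_bichar_def by (simp add: sweedler_mult_left mult_ac)
  also have "\<dots> = sweedler \<alpha> (\<lambda>\<alpha>1 \<alpha>2. counit \<alpha>2 * r \<alpha>1 \<beta>)"
    by (simp only: sweedler_counit_right)
  also have "\<dots> = sweedler \<alpha> (\<lambda>\<alpha>1 \<alpha>2. r \<alpha>1 \<beta> * counit \<alpha>2)"
    by (simp only: mult.commute)
  also have "\<dots> = r \<alpha> \<beta>"
    by (rule sweedler_counit_right)
  finally show "bichar_conv r std_bichar \<alpha> \<beta> = r \<alpha> \<beta>" .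
qed

lemma bichar_conv_assoc: "bichar_conv (bichar_conv a b) c = bichar_conv a (bichar_conv b c)"
proof (intro ext)
  fix \<alpha> \<beta>
  obtain w P where P: "finite P" "var_monom w P = \<alpha>"
    by (rule var_monom_finite_rep)
  obtain w' Q where Q: "finite Q" "var_monom w' Q = \<beta>"
    by (rule var_monom_finite_rep)
  let ?m = "\<lambda>d j. var_monom w (colour_class P d j)"
  let ?n = "\<lambda>e j. var_monom w' (colour_class Q e j)"
  have "bichar_conv (bichar_conv a b) c \<alpha> \<beta> = (\<Sum>d\<in>colourings P 3. \<Sum>e\<in>colourings Q 3.
      a (?m d 2) (?n e 2) * b (?m d 1) (?n e 1) * c (?m d 0) (?n e 0))"
    unfolding P(2)[symmetric] Q(2)[symmetric] using P(1) Q(1)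
    by (subst sum_colourings_1_2[where F = "bichar_conv _ _"]) (simp add: bichar_conv_def colouring_simps)
  also have "\<dots> = (\<Sum>d\<in>colourings P 3. \<Sum>e\<in>colourings Q 3.
      a (?m d 1) (?n e 1) * (b (?m d 2) (?n e 2) * c (?m d 0) (?n e 0)))"
    by (rule sum_colourings_permute_eq2[where p = "[0, 2, 1]" and q = "[0, 2, 1]"])
      (simp_all add: colour_perm_def colour_class_permute_colours eval_nat_numeral mult_ac)
  also have "\<dots> = bichar_conv a (bichar_conv b c) \<alpha> \<beta>"
    unfolding P(2)[symmetric] Q(2)[symmetric] using P(1) Q(1)
    by (subst sum_colourings_1_2[where F = "bichar_conv _ _"]) (simp add: bichar_conv_def colouring_simps)
  finally show "bichar_conv (bichar_conv a b) c \<alpha> \<beta> = bichar_conv a (bichar_conv b c) \<alpha> \<beta>" .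
qed

lemma bichar_conv_add_left:
  assumes "is_bichar a" "is_bichar b"
  shows "bichar_conv a b (\<alpha> + \<beta>) \<gamma> = sweedler \<gamma> (\<lambda>\<delta> \<epsilon>. bichar_conv a b \<alpha> \<delta> * bichar_conv a b \<beta> \<epsilon>)"
proof -
  obtain w P where P: "finite P" "var_monom w P = \<alpha>"
    by (rule var_monom_finite_rep)
  obtain w' Q where Q: "finite Q" "var_monom w' Q = \<beta>"
    by (rule var_monom_finite_rep)
  obtain w'' R where R: "finite R" "var_monom w'' R = \<gamma>"
    by (rule var_monom_finite_rep)
  let ?m = "\<lambda>d j. var_monom w (colour_class P d j)"
  let ?n = "\<lambda>e j. var_monom w' (colour_class Q e j)"
  let ?l = "\<lambda>f j. var_monom w'' (colour_class R f j)"
  have "bichar_conv a b (\<alpha> + \<beta>) \<gamma> =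
      (\<Sum>d\<in>colourings P 2. \<Sum>e\<in>colourings Q 2. \<Sum>f\<in>colourings R 4.
        a (?m d 1) (?l f 3) * a (?n e 1) (?l f 1) * (b (?m d 0) (?l f 2) * b (?n e 0) (?l f 0)))"
    unfolding P(2)[symmetric] Q(2)[symmetric] R(2)[symmetric] using P(1) Q(1) R(1) assms
    by (subst sum_colourings_1_3[where F = "\<lambda>x y z. bichar_conv _ _ (x + y) z"])
      (simp add: bichar_conv_def sweedler_add_monom bichar_add_left colouring_simps)
  also have "\<dots> = (\<Sum>d\<in>colourings P 2. \<Sum>e\<in>colourings Q 2. \<Sum>f\<in>colourings R 4.
        a (?m d 1) (?l f 3) * b (?m d 0) (?l f 1) * (a (?n e 1) (?l f 2) * b (?n e 0) (?l f 0)))"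
    by (rule sum_colourings_permute_eq3[where p = "[0, 1]" and q = "[0, 1]" and p' = "[0, 2, 1, 3]"])
      (simp_all add: colour_perm_def colour_class_permute_colours eval_nat_numeral mult_ac)
  also have "\<dots> = sweedler \<gamma> (\<lambda>\<delta> \<epsilon>. bichar_conv a b \<alpha> \<delta> * bichar_conv a b \<beta> \<epsilon>)"
    unfolding P(2)[symmetric] Q(2)[symmetric] R(2)[symmetric] using P(1) Q(1) R(1) assms
    by (subst sum_colourings_1_3[where
          F = "\<lambda>x y z. sweedler z (\<lambda>\<delta> \<epsilon>. bichar_conv a b x \<delta> * bichar_conv a b y \<epsilon>)"])
      (simp add: bichar_conv_def colouring_simps)
  finally show ?thesis .
qed

lemma is_bichar_conv:
  assumes "is_bichar a" "is_bichar b"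
  shows "is_bichar (bichar_conv a b)"
proof (rule is_bicharI)
  show "bichar_conv a b 0 \<alpha> = counit \<alpha>" for \<alpha>
    using sweedler_counit_left[where g = counit and \<mu> = \<alpha>]
    by (simp add: bichar_conv_def sweedler_0 bichar_zero_left assms)
  show "bichar_conv a b \<alpha> 0 = counit \<alpha>" for \<alpha>
    using sweedler_counit_left[where g = counit and \<mu> = \<alpha>]
    by (simp add: bichar_conv_def sweedler_0 bichar_zero_right assms)
  show "bichar_conv a b (\<alpha> + \<beta>) \<gamma> = sweedler \<gamma> (\<lambda>\<delta> \<epsilon>. bichar_conv a b \<alpha> \<delta> * bichar_conv a b \<beta> \<epsilon>)" for \<alpha> \<beta> \<gamma>
    using assms by (rule bichar_conv_add_left)
  show "bichar_conv a b \<alpha> (\<beta> + \<gamma>) = sweedler \<alpha> (\<lambda>\<delta> \<epsilon>. bichar_conv a b \<delta> \<beta> * bichar_conv a b \<epsilon> \<gamma>)" for \<alpha> \<beta> \<gamma>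
    using bichar_conv_add_left[OF is_bichar_transp[OF assms(1)] is_bichar_transp[OF assms(2)], of \<beta> \<gamma> \<alpha>]
    unfolding transp_bichar_conv[symmetric] by (simp add: transp_bichar_def)
qed

lemma deg_scale_1: "deg_scale 1 s = s"
  by (simp add: deg_scale_def fun_eq_iff)

lemma deg_scale_deg_scale: "deg_scale x (deg_scale y s) = deg_scale (x * y) s"
  by (simp add: deg_scale_def fun_eq_iff power_mult_distrib mult_ac)

lemma deg_scale_0: "is_bichar s \<Longrightarrow> deg_scale 0 s = std_bichar"
  by (intro ext)
    (auto simp: deg_scale_def std_bichar_def total_deg_eq_0_iff bichar_zero_left counit_def power_0_left)

lemma sweedler_deg_scale:
  "sweedler \<mu> (\<lambda>\<alpha> \<beta>. x ^ total_deg \<alpha> * (x ^ total_deg \<beta> * g \<alpha> \<beta>)) = x ^ total_deg \<mu> * sweedler \<mu> g"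
  unfolding sweedler_mult_left
  by (rule sweedler_cong) (auto simp: total_deg_add power_add mult_ac)

lemma is_bichar_deg_scale:
  assumes "is_bichar s"
  shows "is_bichar (deg_scale x s)"
proof (rule is_bicharI)
  show "deg_scale x s 0 \<alpha> = counit \<alpha>" for \<alpha>
    by (simp add: deg_scale_def bichar_zero_left[OF assms])
  show "deg_scale x s \<alpha> 0 = counit \<alpha>" for \<alpha>
    by (cases "\<alpha> = 0") (simp_all add: deg_scale_def bichar_zero_right[OF assms] counit_def)
  show "deg_scale x s (\<alpha> + \<beta>) \<gamma> = sweedler \<gamma> (\<lambda>\<delta> \<epsilon>. deg_scale x s \<alpha> \<delta> * deg_scale x s \<beta> \<epsilon>)" for \<alpha> \<beta> \<gamma>
    by (simp add: deg_scale_def bichar_add_left[OF assms] total_deg_add power_add sweedler_mult_left mult_ac)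
  show "deg_scale x s \<alpha> (\<beta> + \<gamma>) = sweedler \<alpha> (\<lambda>\<delta> \<epsilon>. deg_scale x s \<delta> \<beta> * deg_scale x s \<epsilon> \<gamma>)" for \<alpha> \<beta> \<gamma>
    using sweedler_deg_scale[where x = x and \<mu> = \<alpha> and g = "\<lambda>\<delta> \<epsilon>. s \<delta> \<beta> * s \<epsilon> \<gamma>"]
    by (simp add: deg_scale_def bichar_add_right[OF assms] mult_ac)
qed

lemma bichar_conv_deg_scale: "bichar_conv (deg_scale x a) (deg_scale x b) = deg_scale x (bichar_conv a b)"
proof (intro ext)
  fix \<alpha> \<beta>
  have "bichar_conv (deg_scale x a) (deg_scale x b) \<alpha> \<beta> =
      sweedler \<alpha> (\<lambda>\<alpha>1 \<alpha>2. x ^ total_deg \<alpha>1 * (x ^ total_deg \<alpha>2 * sweedler \<beta> (\<lambda>\<beta>1 \<beta>2. a \<alpha>1 \<beta>1 * b \<alpha>2 \<beta>2)))"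
    unfolding bichar_conv_def deg_scale_def by (simp add: sweedler_mult_left mult_ac)
  also have "\<dots> = deg_scale x (bichar_conv a b) \<alpha> \<beta>"
    by (simp add: sweedler_deg_scale deg_scale_def bichar_conv_def)
  finally show "bichar_conv (deg_scale x a) (deg_scale x b) \<alpha> \<beta> = deg_scale x (bichar_conv a b) \<alpha> \<beta>" .
qed

lemma bichar_conv_self_deg_scale:
  assumes "is_bichar s"
  shows "bichar_conv s (deg_scale x s) = deg_scale (1 + x) s"
proof (intro ext)
  fix \<alpha> \<beta>
  have "bichar_conv s (deg_scale x s) \<alpha> \<beta> =
      sweedler \<alpha> (\<lambda>\<alpha>1 \<alpha>2. x ^ total_deg \<alpha>2 * sweedler \<beta> (\<lambda>\<beta>1 \<beta>2. s \<alpha>1 \<beta>1 * s \<alpha>2 \<beta>2))"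
    unfolding bichar_conv_def deg_scale_def by (simp add: sweedler_mult_left mult_ac)
  also have "\<dots> = sweedler \<alpha> (\<lambda>\<alpha>1 \<alpha>2. 1 ^ total_deg \<alpha>1 * x ^ total_deg \<alpha>2 * s (\<alpha>1 + \<alpha>2) \<beta>)"
    by (simp add: bichar_add_left[OF assms])
  also have "\<dots> = sweedler \<alpha> (\<lambda>\<alpha>1 \<alpha>2. 1 ^ total_deg \<alpha>1 * x ^ total_deg \<alpha>2) * s \<alpha> \<beta>"
    by (subst sweedler_mult_right) (rule sweedler_cong, simp)
  also have "\<dots> = deg_scale (1 + x) s \<alpha> \<beta>"
    by (simp only: sweedler_binomial deg_scale_def)
  finally show "bichar_conv s (deg_scale x s) \<alpha> \<beta> = deg_scale (1 + x) s \<alpha> \<beta>" .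
qed

lemma bichar_conv_deg_scale_minus_one:
  "is_bichar s \<Longrightarrow> bichar_conv s (deg_scale (- 1) s) = std_bichar"
  using bichar_conv_self_deg_scale[of s "- 1"] deg_scale_0[of s] by simp

lemma sweedler_var:
  "sweedler (Poly_Mapping.single i 1) g = g (Poly_Mapping.single i 1) 0 + g 0 (Poly_Mapping.single i 1)"
  using sweedler_add_var[of 0 i g] by (simp add: sweedler_0)

lemma single_Suc_neq_zero: "Poly_Mapping.single i (Suc n) \<noteq> 0"
  by (metis lookup_single_eq lookup_zero nat.distinct(1))

lemma bichar_var_nonzero:
  assumes s: "is_bichar s" and nz: "s (Poly_Mapping.single i 1) \<beta> \<noteq> 0"
  shows "total_deg \<beta> = 1"
proof -
  have "\<beta> \<noteq> 0"
  proof
    assume "\<beta> = 0"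
    with nz show False
      by (simp add: bichar_zero_right[OF s] counit_def single_Suc_neq_zero)
  qed
  then obtain j where j: "0 < Poly_Mapping.lookup \<beta> j"
    by (metis gr0I poly_mapping_eqI lookup_zero)
  define \<beta>' where "\<beta>' = \<beta> - Poly_Mapping.single j 1"
  have \<beta>: "\<beta> = Poly_Mapping.single j 1 + \<beta>'"
    using add_var_diff_cancel[OF j] by (simp add: \<beta>'_def add.commute)
  have "\<beta>' = 0"
  proof (rule ccontr)
    assume "\<beta>' \<noteq> 0"
    then have "s (Poly_Mapping.single i 1) \<beta> = 0"
      unfolding \<beta> bichar_add_right[OF s] sweedler_var
      by (simp add: bichar_zero_left[OF s] counit_def single_Suc_neq_zero)
    with nz show False ..
  qed
  then show ?thesis
    using \<beta> by simp
qed

lemma bichar_homogeneous: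
  assumes s: "is_bichar s" and nz: "s \<alpha> \<beta> \<noteq> 0"
  shows "total_deg \<alpha> = total_deg \<beta>"
proof -
  have "s (var_monom w {..<n}) \<beta> \<noteq> 0 \<Longrightarrow> total_deg \<beta> = n" for w n \<beta>
  proof (induction n arbitrary: \<beta>)
    case 0
    then show ?case by (simp add: bichar_zero_left[OF s] counit_def split: if_splits)
  next
    case (Suc n)
    let ?e = "Poly_Mapping.single (w n) 1"
    have "s (var_monom w {..<Suc n}) \<beta> = sweedler \<beta> (\<lambda>\<delta> \<epsilon>. s ?e \<delta> * s (var_monom w {..<n}) \<epsilon>)"
      by (simp add: lessThan_Suc var_monom_insert bichar_add_left[OF s])
    with Suc.prems obtain \<delta> \<epsilon> where "(\<delta>, \<epsilon>) \<in> splits \<beta>"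
      and "of_nat (bcoef \<beta> \<delta>) * (s ?e \<delta> * s (var_monom w {..<n}) \<epsilon>) \<noteq> 0"
      unfolding sweedler_def by (auto elim!: sum.not_neutral_contains_not_neutral)
    then have "\<delta> + \<epsilon> = \<beta>" "s ?e \<delta> \<noteq> 0" "s (var_monom w {..<n}) \<epsilon> \<noteq> 0"
      by (auto simp: splits_iff)
    then show ?case
      using bichar_var_nonzero[OF s] Suc.IH by (auto simp: total_deg_add)
  qed
  moreover obtain w n where "var_monom w {..<n} = \<alpha>"
    using var_monom_surj by blast
  ultimately show ?thesis
    using nz total_deg_var_monom[of "{..<n}" w] by fastforce
qed

lemma transp_deg_scale:
  assumes "is_bichar s"
  shows "transp_bichar (deg_scale x s) = deg_scale x (transp_bichar s)"
proof (intro ext)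
  fix \<alpha> \<beta>
  show "transp_bichar (deg_scale x s) \<alpha> \<beta> = deg_scale x (transp_bichar s) \<alpha> \<beta>"
  proof (cases "s \<beta> \<alpha> = 0")
    case False
    then show ?thesis
      using bichar_homogeneous[OF assms False] by (simp add: deg_scale_def transp_bichar_def)
  qed (simp add: deg_scale_def transp_bichar_def)
qed

lemma symmetric_bichar_conv:
  "symmetric_bichar a \<Longrightarrow> symmetric_bichar b \<Longrightarrow> symmetric_bichar (bichar_conv a b)"
  unfolding symmetric_bichar_def by (metis is_bichar_conv transp_bichar_conv)

lemma symmetric_bichar_deg_scale: "symmetric_bichar s \<Longrightarrow> symmetric_bichar (deg_scale x s)"
  unfolding symmetric_bichar_def by (metis is_bichar_deg_scale transp_deg_scale)

lemma bichar_conv_cancel: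
  assumes "is_bichar s"
  shows "bichar_conv s (bichar_conv t (deg_scale (- 1) s)) = t"
proof -
  have "bichar_conv s (bichar_conv t (deg_scale (- 1) s)) = bichar_conv t (bichar_conv s (deg_scale (- 1) s))"
    by (metis bichar_conv_assoc bichar_conv_commute)
  then show ?thesis
    by (simp add: bichar_conv_deg_scale_minus_one[OF assms] bichar_conv_std)
qed

lemma symmetric_bichar_sqrt:
  assumes u: "symmetric_bichar u" and h: "h * 2 = 1"
  shows "bichar_conv (deg_scale h u) (transp_bichar (deg_scale h u)) = u"
proof -
  have "is_bichar u" and "transp_bichar (deg_scale h u) = deg_scale h u"
    using u symmetric_bichar_deg_scale[OF u] by (simp_all add: symmetric_bichar_def)
  moreover have "bichar_conv u u = deg_scale 2 u"
    using bichar_conv_self_deg_scale[OF \<open>is_bichar u\<close>, of 1] by (simp add: deg_scale_1)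
  ultimately show ?thesis
    by (simp add: bichar_conv_deg_scale deg_scale_deg_scale h deg_scale_1)
qed

section \<open>The maps EQ and bullet\<close>

definition monom :: "mono \<Rightarrow> (mono \<Rightarrow>\<^sub>0 'a::comm_ring_1)" where
  "monom \<gamma> = Poly_Mapping.single \<gamma> 1"

definition scalar :: "'a::comm_ring_1 \<Rightarrow> (mono \<Rightarrow>\<^sub>0 'a)" where
  "scalar a = Poly_Mapping.single 0 a"

lemma single_eq_scalar_monom: "Poly_Mapping.single \<gamma> a = scalar a * monom \<gamma>"
  by (simp add: scalar_def monom_def mult_single)

lemma scalar_add: "scalar (a + b) = scalar a + scalar b"
  by (simp add: scalar_def single_add)

lemma scalar_mult: "scalar (a * b) = scalar a * scalar b"
  by (simp add: scalar_def mult_single)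

lemma scalar_of_nat: "scalar (of_nat n) = of_nat n"
  by (simp add: scalar_def)

lemma scalar_counit: "scalar (counit \<beta>) = counit \<beta>"
  by (simp add: counit_def scalar_def)

lemma scalar_sweedler: "scalar (sweedler \<mu> g) = sweedler \<mu> (\<lambda>\<alpha> \<beta>. scalar (g \<alpha> \<beta>))"
  by (rule sweedler_additive) (simp_all add: single_add scalar_def)

lemma lookup_scalar_mult: "Poly_Mapping.lookup (scalar a * p) \<mu> = a * Poly_Mapping.lookup p \<mu>"
  by (simp add: scalar_def mult_map_scale_conv_mult[symmetric] map.rep_eq when_def)

lemma keys_scalar_mult: "Poly_Mapping.keys (scalar a * p) \<subseteq> Poly_Mapping.keys p"
  by (auto simp: in_keys_iff lookup_scalar_mult)

lemma poly_mapping_monom_expansion: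
  "p = (\<Sum>\<mu>\<in>Poly_Mapping.keys p. scalar (Poly_Mapping.lookup p \<mu>) * monom \<mu>)"
proof (rule poly_mapping_eqI)
  fix k
  have "Poly_Mapping.lookup (\<Sum>\<mu>\<in>Poly_Mapping.keys p. scalar (Poly_Mapping.lookup p \<mu>) * monom \<mu>) k =
      (\<Sum>\<mu>\<in>Poly_Mapping.keys p. if \<mu> = k then Poly_Mapping.lookup p \<mu> else 0)"
    by (simp add: lookup_sum single_eq_scalar_monom[symmetric] lookup_single when_def)
  also have "\<dots> = Poly_Mapping.lookup p k"
    by (simp add: in_keys_iff)
  finally show "Poly_Mapping.lookup p k =
      Poly_Mapping.lookup (\<Sum>\<mu>\<in>Poly_Mapping.keys p. scalar (Poly_Mapping.lookup p \<mu>) * monom \<mu>) k"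
    by simp
qed

lemma sum_splits3_eq_sweedler:
  fixes G :: "mono \<Rightarrow> mono \<Rightarrow> mono \<Rightarrow> 'b::comm_semiring_1"
  shows "(\<Sum>(\<alpha>, \<beta>, \<gamma>)\<in>splits3 \<mu>. of_nat (bcoef \<mu> \<alpha> * bcoef (\<beta> + \<gamma>) \<beta>) * G \<alpha> \<beta> \<gamma>) =
    sweedler \<mu> (\<lambda>\<alpha> \<delta>. sweedler \<delta> (\<lambda>\<beta> \<gamma>. G \<alpha> \<beta> \<gamma>))"
proof -
  have "sweedler \<mu> (\<lambda>\<alpha> \<delta>. sweedler \<delta> (\<lambda>\<beta> \<gamma>. G \<alpha> \<beta> \<gamma>)) =
      (\<Sum>x\<in>splits \<mu>. \<Sum>y\<in>splits (snd x).
        of_nat (bcoef \<mu> (fst x)) * (of_nat (bcoef (snd x) (fst y)) * G (fst x) (fst y) (snd y)))"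
    by (simp add: sweedler_def case_prod_unfold sum_distrib_left)
  also have "\<dots> = (\<Sum>z\<in>Sigma (splits \<mu>) (\<lambda>x. splits (snd x)).
      of_nat (bcoef \<mu> (fst (fst z))) *
        (of_nat (bcoef (snd (fst z)) (fst (snd z))) * G (fst (fst z)) (fst (snd z)) (snd (snd z))))"
    by (subst sum.Sigma) (simp_all add: finite_splits case_prod_unfold)
  also have "\<dots> = (\<Sum>(\<alpha>, \<beta>, \<gamma>)\<in>splits3 \<mu>. of_nat (bcoef \<mu> \<alpha> * bcoef (\<beta> + \<gamma>) \<beta>) * G \<alpha> \<beta> \<gamma>)"
    by (rule sum.reindex_bij_witness[where i = "\<lambda>(\<alpha>, \<beta>, \<gamma>). ((\<alpha>, \<beta> + \<gamma>), (\<beta>, \<gamma>))"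
          and j = "\<lambda>((\<alpha>, \<delta>), (\<beta>, \<gamma>)). (\<alpha>, \<beta>, \<gamma>)"])
      (auto simp: splits_def splits3_def add.assoc mult.assoc)
  finally show ?thesis
    by simp
qed

definition EQ_monom :: "(mono \<Rightarrow> mono \<Rightarrow> 'a::comm_ring_1) \<Rightarrow> mono \<Rightarrow> (mono \<Rightarrow>\<^sub>0 'a)" where
  "EQ_monom r \<mu> = sweedler \<mu> (\<lambda>\<alpha> \<delta>. sweedler \<delta> (\<lambda>\<beta> \<gamma>. scalar (r \<alpha> \<beta>) * monom \<gamma>))"

lemma EQ_eq_sum_keys: "EQ r p = (\<Sum>\<mu>\<in>Poly_Mapping.keys p. scalar (Poly_Mapping.lookup p \<mu>) * EQ_monom r \<mu>)"
proof -
  have "(\<Sum>(\<alpha>, \<beta>, \<gamma>)\<in>splits3 \<mu>. Poly_Mapping.single \<gamma>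
        (Poly_Mapping.lookup p \<mu> * of_nat (bcoef \<mu> \<alpha> * bcoef (\<beta> + \<gamma>) \<beta>) * r \<alpha> \<beta>)) =
      scalar (Poly_Mapping.lookup p \<mu>) * EQ_monom r \<mu>" for \<mu>
  proof -
    have "(\<Sum>(\<alpha>, \<beta>, \<gamma>)\<in>splits3 \<mu>. Poly_Mapping.single \<gamma>
          (Poly_Mapping.lookup p \<mu> * of_nat (bcoef \<mu> \<alpha> * bcoef (\<beta> + \<gamma>) \<beta>) * r \<alpha> \<beta>)) =
        (\<Sum>(\<alpha>, \<beta>, \<gamma>)\<in>splits3 \<mu>. of_nat (bcoef \<mu> \<alpha> * bcoef (\<beta> + \<gamma>) \<beta>) *
          (scalar (Poly_Mapping.lookup p \<mu>) * (scalar (r \<alpha> \<beta>) * monom \<gamma>)))"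
      by (rule sum.cong[OF refl]) (auto simp: single_eq_scalar_monom scalar_mult scalar_of_nat mult_ac)
    also have "\<dots> = scalar (Poly_Mapping.lookup p \<mu>) * EQ_monom r \<mu>"
      by (subst sum_splits3_eq_sweedler) (simp add: EQ_monom_def sweedler_mult_left)
    finally show ?thesis .
  qed
  then show ?thesis
    unfolding EQ_def by simp
qed

lemma EQ_eq_sum_superset:
  assumes "finite K" "Poly_Mapping.keys p \<subseteq> K"
  shows "EQ r p = (\<Sum>\<mu>\<in>K. scalar (Poly_Mapping.lookup p \<mu>) * EQ_monom r \<mu>)"
  unfolding EQ_eq_sum_keys by (rule sum.mono_neutral_left) (use assms in \<open>auto simp: in_keys_iff scalar_def\<close>)

lemma EQ_add: "EQ r (p + q) = EQ r p + EQ r q"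
proof -
  let ?K = "Poly_Mapping.keys p \<union> Poly_Mapping.keys q"
  have "EQ r (p + q) = (\<Sum>\<mu>\<in>?K. scalar (Poly_Mapping.lookup (p + q) \<mu>) * EQ_monom r \<mu>)"
    by (rule EQ_eq_sum_superset) (auto dest: set_mp[OF keys_add])
  also have "\<dots> = (\<Sum>\<mu>\<in>?K. scalar (Poly_Mapping.lookup p \<mu>) * EQ_monom r \<mu>) +
      (\<Sum>\<mu>\<in>?K. scalar (Poly_Mapping.lookup q \<mu>) * EQ_monom r \<mu>)"
    by (simp add: lookup_add scalar_add distrib_right sum.distrib)
  also have "\<dots> = EQ r p + EQ r q"
    by (simp add: EQ_eq_sum_superset[of ?K p] EQ_eq_sum_superset[of ?K q])
  finally show ?thesis .
qed

lemma EQ_zero: "EQ r 0 = 0"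
  by (simp add: EQ_eq_sum_keys)

lemma EQ_scalar_mult: "EQ r (scalar a * p) = scalar a * EQ r p"
proof -
  have "EQ r (scalar a * p) =
      (\<Sum>\<mu>\<in>Poly_Mapping.keys p. scalar (Poly_Mapping.lookup (scalar a * p) \<mu>) * EQ_monom r \<mu>)"
    by (rule EQ_eq_sum_superset) (simp_all add: keys_scalar_mult)
  also have "\<dots> = scalar a * EQ r p"
    unfolding lookup_scalar_mult scalar_mult EQ_eq_sum_keys sum_distrib_left by (simp add: mult.assoc)
  finally show ?thesis .
qed

lemma EQ_monom_eq: "EQ r (monom \<mu>) = EQ_monom r \<mu>"
  using EQ_eq_sum_superset[of "{\<mu>}" "monom \<mu>" r] by (simp add: monom_def scalar_def)

lemma EQ_sum: "EQ r (sum f A) = (\<Sum>a\<in>A. EQ r (f a))"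
  by (rule sum_comp_morphism[symmetric, unfolded comp_def]) (simp_all add: EQ_add EQ_zero)

lemma EQ_sweedler: "EQ r (sweedler \<mu> g) = sweedler \<mu> (\<lambda>\<alpha> \<beta>. EQ r (g \<alpha> \<beta>))"
  by (rule sweedler_additive) (simp_all add: EQ_add EQ_zero)

definition bullet_monom :: "(mono \<Rightarrow> mono \<Rightarrow> 'a::comm_ring_1) \<Rightarrow> mono \<Rightarrow> mono \<Rightarrow> (mono \<Rightarrow>\<^sub>0 'a)" where
  "bullet_monom t \<alpha> \<beta> = sweedler \<alpha> (\<lambda>\<alpha>1 \<alpha>2. sweedler \<beta> (\<lambda>\<beta>1 \<beta>2. scalar (t \<alpha>2 \<beta>2) * monom (\<alpha>1 + \<beta>1)))"

lemma bullet_eq_sum_keys: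
  "bullet t p q = (\<Sum>\<alpha>\<in>Poly_Mapping.keys p. \<Sum>\<beta>\<in>Poly_Mapping.keys q.
    scalar (Poly_Mapping.lookup p \<alpha>) * scalar (Poly_Mapping.lookup q \<beta>) * bullet_monom t \<alpha> \<beta>)"
  unfolding bullet_def bullet_monom_def sweedler_def
  by (simp add: sum_distrib_left case_prod_unfold single_eq_scalar_monom scalar_mult scalar_of_nat mult_ac)

lemma bullet_eq_sum_superset:
  assumes "finite K" "Poly_Mapping.keys p \<subseteq> K" "finite L" "Poly_Mapping.keys q \<subseteq> L"
  shows "bullet t p q = (\<Sum>\<alpha>\<in>K. \<Sum>\<beta>\<in>L.
    scalar (Poly_Mapping.lookup p \<alpha>) * scalar (Poly_Mapping.lookup q \<beta>) * bullet_monom t \<alpha> \<beta>)"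
proof -
  have "bullet t p q = (\<Sum>\<alpha>\<in>K. \<Sum>\<beta>\<in>Poly_Mapping.keys q.
      scalar (Poly_Mapping.lookup p \<alpha>) * scalar (Poly_Mapping.lookup q \<beta>) * bullet_monom t \<alpha> \<beta>)"
    unfolding bullet_eq_sum_keys
    by (rule sum.mono_neutral_left) (use assms in \<open>auto simp: in_keys_iff scalar_def\<close>)
  also have "\<dots> = (\<Sum>\<alpha>\<in>K. \<Sum>\<beta>\<in>L.
      scalar (Poly_Mapping.lookup p \<alpha>) * scalar (Poly_Mapping.lookup q \<beta>) * bullet_monom t \<alpha> \<beta>)"
    by (intro sum.cong refl sum.mono_neutral_left) (use assms in \<open>auto simp: in_keys_iff scalar_def\<close>)
  finally show ?thesis .
qed

lemma bullet_add_left: "bullet t (p + p') q = bullet t p q + bullet t p' q"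
proof -
  let ?K = "Poly_Mapping.keys p \<union> Poly_Mapping.keys p'"
  let ?S = "\<lambda>f. \<Sum>\<alpha>\<in>?K. \<Sum>\<beta>\<in>Poly_Mapping.keys q.
    scalar (Poly_Mapping.lookup f \<alpha>) * scalar (Poly_Mapping.lookup q \<beta>) * bullet_monom t \<alpha> \<beta>"
  have "bullet t (p + p') q = ?S (p + p')" "bullet t p q = ?S p" "bullet t p' q = ?S p'"
    by (rule bullet_eq_sum_superset; auto dest: set_mp[OF keys_add])+
  then show ?thesis
    by (simp add: lookup_add scalar_add distrib_right sum.distrib)
qed

lemma bullet_add_right: "bullet t p (q + q') = bullet t p q + bullet t p q'"
proof -
  let ?L = "Poly_Mapping.keys q \<union> Poly_Mapping.keys q'"
  let ?S = "\<lambda>f. \<Sum>\<alpha>\<in>Poly_Mapping.keys p. \<Sum>\<beta>\<in>?L.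
    scalar (Poly_Mapping.lookup p \<alpha>) * scalar (Poly_Mapping.lookup f \<beta>) * bullet_monom t \<alpha> \<beta>"
  have "bullet t p (q + q') = ?S (q + q')" "bullet t p q = ?S q" "bullet t p q' = ?S q'"
    by (rule bullet_eq_sum_superset; auto dest: set_mp[OF keys_add])+
  then show ?thesis
    by (simp add: lookup_add scalar_add distrib_right distrib_left sum.distrib)
qed

lemma bullet_scalar_left: "bullet t (scalar a * p) q = scalar a * bullet t p q"
proof -
  have "bullet t (scalar a * p) q = (\<Sum>\<alpha>\<in>Poly_Mapping.keys p. \<Sum>\<beta>\<in>Poly_Mapping.keys q.
      scalar (Poly_Mapping.lookup (scalar a * p) \<alpha>) * scalar (Poly_Mapping.lookup q \<beta>) * bullet_monom t \<alpha> \<beta>)"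
    by (rule bullet_eq_sum_superset) (simp_all add: keys_scalar_mult)
  also have "\<dots> = scalar a * bullet t p q"
    unfolding lookup_scalar_mult scalar_mult bullet_eq_sum_keys sum_distrib_left by (simp add: mult.assoc)
  finally show ?thesis .
qed

lemma bullet_scalar_right: "bullet t p (scalar a * q) = scalar a * bullet t p q"
proof -
  have "bullet t p (scalar a * q) = (\<Sum>\<alpha>\<in>Poly_Mapping.keys p. \<Sum>\<beta>\<in>Poly_Mapping.keys q.
      scalar (Poly_Mapping.lookup p \<alpha>) * scalar (Poly_Mapping.lookup (scalar a * q) \<beta>) * bullet_monom t \<alpha> \<beta>)"
    by (rule bullet_eq_sum_superset) (simp_all add: keys_scalar_mult)
  also have "\<dots> = scalar a * bullet t p q"
    unfolding lookup_scalar_mult scalar_mult bullet_eq_sum_keys sum_distrib_left by (simp add: mult_ac)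
  finally show ?thesis .
qed

lemma bullet_monom_eq: "bullet t (monom \<alpha>) (monom \<beta>) = bullet_monom t \<alpha> \<beta>"
  by (simp add: bullet_eq_sum_keys monom_def scalar_def)

lemma bullet_zero_left: "bullet t 0 q = 0"
  by (simp add: bullet_eq_sum_keys)

lemma bullet_zero_right: "bullet t p 0 = 0"
  by (simp add: bullet_eq_sum_keys)

lemma bullet_sweedler_left: "bullet t (sweedler \<mu> g) q = sweedler \<mu> (\<lambda>\<alpha> \<beta>. bullet t (g \<alpha> \<beta>) q)"
  by (rule sweedler_additive[where h = "\<lambda>x. bullet t x q"]) (simp_all add: bullet_add_left bullet_zero_left)

lemma bullet_sweedler_right: "bullet t p (sweedler \<mu> g) = sweedler \<mu> (\<lambda>\<alpha> \<beta>. bullet t p (g \<alpha> \<beta>))"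
  by (rule sweedler_additive[where h = "\<lambda>x. bullet t p x"]) (simp_all add: bullet_add_right bullet_zero_right)

lemma bullet_sum_left: "bullet t (sum f A) q = (\<Sum>a\<in>A. bullet t (f a) q)"
  by (rule sum_comp_morphism[where h = "\<lambda>x. bullet t x q", symmetric, unfolded comp_def])
    (simp_all add: bullet_add_left bullet_zero_left)

lemma bullet_sum_right: "bullet t p (sum f A) = (\<Sum>a\<in>A. bullet t p (f a))"
  by (rule sum_comp_morphism[where h = "\<lambda>x. bullet t p x", symmetric, unfolded comp_def])
    (simp_all add: bullet_add_right bullet_zero_right)

lemmas EQ_bullet_expand_simps = bullet_monom_def EQ_monom_def EQ_sweedler EQ_scalar_mult EQ_monom_eq
  sweedler_add_monom bichar_add_left bichar_add_right scalar_mult scalar_sweedler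
  sweedler_mult_left sweedler_mult_right bichar_conv_def transp_bichar_def
  bullet_sweedler_left bullet_sweedler_right bullet_scalar_left bullet_scalar_right bullet_monom_eq
  EQ_sum bullet_sum_left bullet_sum_right colouring_simps

lemma EQ_bullet_monom:
  assumes "is_bichar r"
  shows "EQ r (bullet_monom t \<alpha> \<beta>) =
    bullet (bichar_conv t (bichar_conv r (transp_bichar r))) (EQ_monom r \<alpha>) (EQ_monom r \<beta>)"
proof -
  obtain w P where P: "finite P" "var_monom w P = \<alpha>"
    by (rule var_monom_finite_rep)
  obtain w' Q where Q: "finite Q" "var_monom w' Q = \<beta>"
    by (rule var_monom_finite_rep)
  let ?m = "\<lambda>d j. var_monom w (colour_class P d j)"
  let ?n = "\<lambda>e j. var_monom w' (colour_class Q e j)"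
  have "bullet (bichar_conv t (bichar_conv r (transp_bichar r))) (EQ_monom r \<alpha>) (EQ_monom r \<beta>) =
      (\<Sum>d\<in>colourings P 6. \<Sum>e\<in>colourings Q 6.
        scalar (r (?n e 1) (?n e 2)) * (scalar (r (?m d 1) (?m d 2)) *
        (scalar (t (?m d 4) (?n e 4)) * (scalar (r (?m d 5) (?n e 5)) * scalar (r (?n e 0) (?m d 0))) *
        monom (?m d 3 + ?n e 3))))"
    unfolding P(2)[symmetric] Q(2)[symmetric] using P(1) Q(1) assms
    by (subst sum_colourings_1_2[where F = "\<lambda>x y. bullet _ (EQ_monom r x) (EQ_monom r y)"])
      (simp add: EQ_bullet_expand_simps)
  also have "\<dots> = (\<Sum>d\<in>colourings P 6. \<Sum>e\<in>colourings Q 6.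
      scalar (t (?m d 0) (?n e 0)) * (scalar (r (?m d 5) (?m d 4)) * scalar (r (?m d 2) (?n e 4)) *
      (scalar (r (?n e 5) (?m d 3)) * scalar (r (?n e 2) (?n e 3))) * monom (?m d 1 + ?n e 1)))"
    by (rule sum_colourings_permute_eq2[where p = "[4, 3, 5, 0, 2, 1]" and q = "[4, 3, 1, 2, 5, 0]"])
      (simp_all add: colour_perm_def colour_class_permute_colours eval_nat_numeral mult_ac)
  also have "\<dots> = EQ r (bullet_monom t \<alpha> \<beta>)"
    unfolding P(2)[symmetric] Q(2)[symmetric] using P(1) Q(1) assms
    by (subst sum_colourings_1_2[where F = "\<lambda>x y. EQ r (bullet_monom t x y)"])
      (simp add: EQ_bullet_expand_simps)
  finally show ?thesis ..
qed

theorem EQ_bullet: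
  assumes "is_bichar r"
  shows "EQ r (bullet t p q) = bullet (bichar_conv t (bichar_conv r (transp_bichar r))) (EQ r p) (EQ r q)"
proof -
  let ?T = "bichar_conv t (bichar_conv r (transp_bichar r))"
  have "EQ r (bullet t p q) = (\<Sum>\<alpha>\<in>Poly_Mapping.keys p. \<Sum>\<beta>\<in>Poly_Mapping.keys q.
      scalar (Poly_Mapping.lookup p \<alpha>) * (scalar (Poly_Mapping.lookup q \<beta>) * EQ r (bullet_monom t \<alpha> \<beta>)))"
    unfolding bullet_eq_sum_keys EQ_sum mult.assoc EQ_scalar_mult ..
  also have "\<dots> = (\<Sum>\<alpha>\<in>Poly_Mapping.keys p. \<Sum>\<beta>\<in>Poly_Mapping.keys q.
      scalar (Poly_Mapping.lookup p \<alpha>) *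
        (scalar (Poly_Mapping.lookup q \<beta>) * bullet ?T (EQ_monom r \<alpha>) (EQ_monom r \<beta>)))"
    unfolding EQ_bullet_monom[OF assms] ..
  also have "\<dots> = bullet ?T (EQ r p) (EQ r q)"
    unfolding EQ_eq_sum_keys[of r p] EQ_eq_sum_keys[of r q] bullet_sum_left bullet_sum_right
      bullet_scalar_left bullet_scalar_right
    by (subst sum.swap) (simp add: sum_distrib_left mult.left_commute)
  finally show ?thesis .
qed

lemma EQ_EQ_monom: "EQ r (EQ_monom r' \<mu>) = EQ_monom (bichar_conv r' r) \<mu>"
proof -
  obtain w P where P: "finite P" "var_monom w P = \<mu>"
    by (rule var_monom_finite_rep)
  let ?m = "\<lambda>d j. var_monom w (colour_class P d j)"
  have "EQ_monom (bichar_conv r' r) \<mu> = (\<Sum>d\<in>colourings P 5.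
      scalar (r' (?m d 3) (?m d 4)) * scalar (r (?m d 1) (?m d 2)) * monom (?m d 0))"
    unfolding P(2)[symmetric] using P(1)
    by (subst sum_colourings_1[where F = "EQ_monom (bichar_conv r' r)"]) (simp add: EQ_bullet_expand_simps)
  also have "\<dots> = (\<Sum>d\<in>colourings P 5.
      scalar (r' (?m d 1) (?m d 2)) * (scalar (r (?m d 3) (?m d 4)) * monom (?m d 0)))"
    by (rule sum_colourings_permute_eq[where p = "[0, 3, 4, 1, 2]"])
      (simp_all add: colour_perm_def colour_class_permute_colours eval_nat_numeral mult_ac)
  also have "\<dots> = EQ r (EQ_monom r' \<mu>)"
    unfolding P(2)[symmetric] using P(1)
    by (subst sum_colourings_1[where F = "\<lambda>x. EQ r (EQ_monom r' x)"]) (simp add: EQ_bullet_expand_simps)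
  finally show ?thesis ..
qed

lemma EQ_EQ: "EQ r (EQ r' p) = EQ (bichar_conv r' r) p"
  by (simp add: EQ_eq_sum_keys[of r' p] EQ_eq_sum_keys[of "bichar_conv r' r" p] EQ_sum EQ_scalar_mult EQ_EQ_monom)

lemma EQ_monom_std: "EQ_monom std_bichar \<mu> = monom \<mu>"
proof -
  have "EQ_monom std_bichar \<mu> = sweedler \<mu> (\<lambda>\<alpha> \<delta>. counit \<alpha> * sweedler \<delta> (\<lambda>\<beta> \<gamma>. counit \<beta> * monom \<gamma>))"
    unfolding EQ_monom_def std_bichar_def scalar_mult scalar_counit by (simp add: sweedler_mult_left mult.assoc)
  also have "\<dots> = monom \<mu>"
    by (simp add: sweedler_counit_left)
  finally show ?thesis .
qed

lemma EQ_std: "EQ std_bichar p = p"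
  by (simp add: EQ_eq_sum_keys EQ_monom_std poly_mapping_monom_expansion[symmetric])

lemma EQ_one: "is_bichar r \<Longrightarrow> EQ r 1 = 1"
  using EQ_monom_eq[of r 0]
  by (simp add: EQ_monom_def sweedler_0 bichar_zero_left counit_def monom_def scalar_def)

lemma EQ_bij:
  assumes "is_bichar r"
  shows "bij (EQ r)"
proof (rule o_bij[where g = "EQ (deg_scale (- 1) r)"])
  have "bichar_conv r (deg_scale (- 1) r) = std_bichar"
    using assms by (rule bichar_conv_deg_scale_minus_one)
  moreover from this have "bichar_conv (deg_scale (- 1) r) r = std_bichar"
    by (simp add: bichar_conv_commute)
  ultimately show "EQ (deg_scale (- 1) r) \<circ> EQ r = id" and "EQ r \<circ> EQ (deg_scale (- 1) r) = id"
    by (auto intro!: ext simp: EQ_EQ EQ_std)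
qed

lemma complex_algebra_half:
  assumes "complex_algebra_structure emb"
  shows "emb (1 / 2) * 2 = 1"
proof -
  have add: "emb (x + y) = emb x + emb y" for x y
    using assms by (simp add: complex_algebra_structure_def)
  have "emb (1 / 2) * 2 = emb (1 / 2) + emb (1 / 2)"
    by (rule mult_2_right)
  also have "\<dots> = emb (1 / 2 + 1 / 2)"
    by (rule add[symmetric])
  also have "\<dots> = 1"
    using assms by (simp add: complex_algebra_structure_def)
  finally show ?thesis .
qed

theorem theorem3p1:
  fixes emb :: "complex \<Rightarrow> 'a::comm_ring_1"
    and s1 s2 :: "mono \<Rightarrow> mono \<Rightarrow> 'a"
  assumes "complex_algebra_structure emb"
    and "symmetric_bichar s1"
    and "symmetric_bichar s2"
  shows "\<exists>r. is_bichar r \<and> bij (EQ r) \<and>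
           EQ r (Poly_Mapping.single 0 1) = Poly_Mapping.single 0 1 \<and>
           (\<forall>p q. EQ r (bullet s1 p q) = bullet s2 (EQ r p) (EQ r q))"
proof -
  define u where "u = bichar_conv s2 (deg_scale (- 1) s1)"
  define r where "r = deg_scale (emb (1 / 2)) u"
  have u: "symmetric_bichar u"
    unfolding u_def using assms(2,3) by (intro symmetric_bichar_conv symmetric_bichar_deg_scale)
  then have r: "is_bichar r"
    unfolding r_def symmetric_bichar_def by (simp add: is_bichar_deg_scale)
  have "bichar_conv r (transp_bichar r) = u"
    unfolding r_def using u complex_algebra_half[OF assms(1)] by (rule symmetric_bichar_sqrt)
  then have "bichar_conv s1 (bichar_conv r (transp_bichar r)) = s2"
    using assms(2) by (simp add: u_def symmetric_bichar_def bichar_conv_cancel)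
  then show ?thesis
    using r by (intro exI[of _ r]) (simp add: EQ_bij EQ_one EQ_bullet)
qed

end
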